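(* Let $\mathcal{X}$ and $\mathcal{Z}$ be Euclidean spaces. Let $\mathfrak{S}:\mathcal{X}\to\mathcal{Z}$ be a differentiable mapping such that $\mathfrak{S}$ and its G\^ateaux derivative $\mathrm{D}\mathfrak{S}$ are Lipschitz continuous; let $g:\mathcal{Z}\to\mathbb{R}$ be Lipschitz continuous and $\eta$-weakly convex for some $\eta>0$ (i.e. $g+\frac{\eta}{2}\|\cdot\|^2$ is convex); let $C\subset\mathcal{X}$ be a nonempty closed prox-regular set; set $F:=g\circ\mathfrak{S}$ and assume $\mathop{\mathrm{argmin}}_{x\in C}F(x)\neq\emptyset$. Then a point $x^\star\in\mathcal{X}$ satisfies $0\in\partial_F(F+\iota_C)(x^\star)$ (i.e. $x^\star$ is a stationary point of the problem of minimizing $F$ over $C$) if and only if $\mathcal{M}_{\gamma}^{F,\iota_C}(x^\star)=0$ for some $\gamma>0$.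
   Context: Prox-regularity of $C$: the metric projection $P_C:\mathcal{X}\rightrightarrows C$, $P_C(\bar x):=\mathop{\mathrm{argmin}}_{x\in C}\|\bar x-x\|$, is single-valued on some open subset of $\mathcal{X}$ containing $C$. The indicator function $\iota_C$ equals $0$ on $C$ and $+\infty$ outside $C$. For a proper function $J:\mathcal{X}\to\mathbb{R}\cup\{+\infty\}$, the Fr\'echet subdifferential $\partial_F J(\bar x)$ at $\bar x\in\mathrm{dom}\,J$ is the set of $v\in\mathcal{X}$ with $\sup_{\epsilon>0}\inf_{0<\|x-\bar x\|<\epsilon}\frac{J(x)-J(\bar x)-\langle v,x-\bar x\rangle}{\|x-\bar x\|}\ge 0$, and $\partial_F J(\bar x):=\emptyset$ for $\bar x\notin\mathrm{dom}\,J$. For $\gamma>0$ and $\bar x\in\mathcal{X}$, the stationarity measure is $\mathcal{M}_{\gamma}^{F,\iota_C}(\bar x):=\mathrm{dist}\big(0,\{(\bar x-p)/\gamma : p\in P_C(\bar x-\gamma v),\ v\in\partial_F F(\bar x)\}\big)$, where $\mathrm{dist}(0,S)=\inf_{s\in S}\|s\|$. *)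

theory Defs
  imports "HOL-Analysis.Analysis" "HOL-Library.Extended_Real"
begin

definition proj :: "'a::euclidean_space set \<Rightarrow> 'a \<Rightarrow> 'a set" where
  "proj C xb = {x \<in> C. \<forall>y\<in>C. norm (xb - x) \<le> norm (xb - y)}"

definition prox_regular :: "'a::euclidean_space set \<Rightarrow> bool" where
  "prox_regular C \<longleftrightarrow> (\<exists>U. open U \<and> C \<subseteq> U \<and> (\<forall>x\<in>U. \<exists>!p. p \<in> proj C x))"

definition ind :: "'a set \<Rightarrow> 'a \<Rightarrow> ereal" where
  "ind C x = (if x \<in> C then 0 else \<infinity>)"

definition frechet_subdiff :: "('a::euclidean_space \<Rightarrow> ereal) \<Rightarrow> 'a \<Rightarrow> 'a set" where
  "frechet_subdiff J xb =
     (if J xb = \<infinity> then {} else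
      {v. (SUP \<epsilon>\<in>{0<..}. INF x\<in>{x. 0 < norm (x - xb) \<and> norm (x - xb) < \<epsilon>}.
             (J x - J xb - ereal (v \<bullet> (x - xb))) / ereal (norm (x - xb))) \<ge> 0})"

text \<open>Stationarity measure M_gamma^{F, iota_C}; dist(0, empty) = +infinity.\<close>
definition stat_measure :: "('a::euclidean_space \<Rightarrow> real) \<Rightarrow> 'a set \<Rightarrow> real \<Rightarrow> 'a \<Rightarrow> ereal" where
  "stat_measure F C \<gamma> xb =
     (INF s \<in> {(1 / \<gamma>) *\<^sub>R (xb - p) | p v.
                 v \<in> frechet_subdiff (\<lambda>x. ereal (F x)) xb \<and> p \<in> proj C (xb - \<gamma> *\<^sub>R v)}.
        ereal (norm s))"

end

(*
  If v is a Frechet subgradient of F at x and x = P_C(x - gamma v), the proximal normal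
  inequality makes -v a Frechet normal of C at x, which is stationarity; conversely
  M_gamma(x) = 0 produces such a pair (v, x) in the limit, because Frechet subgradients of a
  Lipschitz function are bounded and form a closed set.

  For the forward direction, F = g o S agrees at x, up to O(|y - x|^2), with the convex model
  h(y) = (g + eta/2 |.|^2)(S x + DS x (y - x)) minus an affine function. Prox-regularity makes
  every direction of the polar T of the Frechet normal cone N tangent to C, so stationarity of
  F on C makes x a minimiser of h on x + T. Separating the epigraph of h from x + T gives a
  subgradient k of h with -k in the polar of T, which is N by the bipolar theorem. Then k is a
  Frechet subgradient of F, and since Frechet normals of a prox-regular set are proximal normals
  of uniform radius, x = P_C(x - gamma k) for some gamma > 0.
*)

theory Submission
  imports Defs
begin

lemma power2_norm_add: "(norm (x + y))\<^sup>2 = (norm x)\<^sup>2 + 2 * inner x y + (norm (y::'a::real_inner))\<^sup>2"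
  using dot_norm[of x y] by simp

lemma power2_norm_diff: "(norm (x - y))\<^sup>2 = (norm x)\<^sup>2 - 2 * inner x y + (norm (y::'a::real_inner))\<^sup>2"
  using dot_norm_neg[of x y] by simp

lemma real_le_if_le_add_small:
  fixes a b K r :: real
  assumes "0 < r" "0 \<le> K" "\<And>e. 0 < e \<Longrightarrow> e < r \<Longrightarrow> a \<le> b + K * e"
  shows "a \<le> b"
proof (rule field_le_epsilon)
  fix e :: real assume "e > 0"
  define e' where "e' = min (r / 2) (e / (K + 1))"
  have "0 < e'" "e' < r" using \<open>e > 0\<close> \<open>0 < r\<close> \<open>0 \<le> K\<close> by (auto simp: e'_def)
  have "K * e' \<le> (K + 1) * (e / (K + 1))"
    using \<open>0 \<le> K\<close> \<open>0 < e'\<close> by (intro mult_mono) (auto simp: e'_def)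
  then have "K * e' \<le> e" using \<open>0 \<le> K\<close> by simp
  then show "a \<le> b + e" using assms(3)[OF \<open>0 < e'\<close> \<open>e' < r\<close>] by simp
qed

lemma norm_sgn_diff_le:
  fixes w \<zeta> :: "'a::real_normed_vector"
  assumes "w \<noteq> 0" "t > 0" "norm \<zeta> = 1"
  shows "norm (sgn w - \<zeta>) \<le> 2 * norm (w - t *\<^sub>R \<zeta>) / t"
proof -
  have "sgn w - \<zeta> = (1 / norm w - 1 / t) *\<^sub>R w + (1 / t) *\<^sub>R (w - t *\<^sub>R \<zeta>)"
    using assms by (simp add: sgn_div_norm algebra_simps divide_inverse)
  then have "norm (sgn w - \<zeta>) \<le> \<bar>1 / norm w - 1 / t\<bar> * norm w + norm (w - t *\<^sub>R \<zeta>) / t"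
    using norm_triangle_ineq[of "(1 / norm w - 1 / t) *\<^sub>R w" "(1 / t) *\<^sub>R (w - t *\<^sub>R \<zeta>)"] \<open>t > 0\<close>
    by simp
  also have "\<bar>1 / norm w - 1 / t\<bar> * norm w = \<bar>t - norm w\<bar> / t"
    using assms by (simp add: field_simps abs_div abs_mult)
  also have "\<bar>t - norm w\<bar> \<le> norm (w - t *\<^sub>R \<zeta>)"
    using norm_triangle_ineq3[of "t *\<^sub>R \<zeta>" w] assms by (simp add: norm_minus_commute)
  finally show ?thesis using \<open>t > 0\<close> by (simp add: divide_right_mono add_divide_distrib)
qed

section \<open>Metric projection\<close>

lemma proj_iff_infdist:
  fixes C :: "'a::euclidean_space set"
  shows "p \<in> proj C x \<longleftrightarrow> p \<in> C \<and> norm (x - p) \<le> infdist x C"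
proof
  assume p: "p \<in> proj C x"
  then have "C \<noteq> {}" "p \<in> C" by (auto simp: proj_def)
  moreover have "norm (x - p) \<le> (INF c\<in>C. dist x c)"
    using p \<open>C \<noteq> {}\<close> by (intro cINF_greatest) (auto simp: proj_def dist_norm)
  ultimately show "p \<in> C \<and> norm (x - p) \<le> infdist x C" by (simp add: infdist_notempty)
next
  assume "p \<in> C \<and> norm (x - p) \<le> infdist x C"
  then show "p \<in> proj C x"
    using infdist_le[of _ C x] by (fastforce simp: proj_def dist_norm)
qed

lemma infdist_eq_norm_proj:
  fixes C :: "'a::euclidean_space set"
  assumes "p \<in> proj C x"
  shows "infdist x C = norm (x - p)"
  using assms infdist_le[of p C x] by (auto simp: proj_iff_infdist dist_norm)

lemma proj_nonempty:
  fixes C :: "'a::euclidean_space set"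
  assumes "closed C" "C \<noteq> {}"
  obtains p where "p \<in> proj C x"
proof -
  obtain p where "p \<in> C" "\<And>y. y \<in> C \<Longrightarrow> dist x p \<le> dist x y"
    using distance_attains_inf[OF assms, of x] by blast
  then show ?thesis using that by (auto simp: proj_def dist_norm)
qed

lemma proximal_normal_ineq:
  fixes C :: "'a::euclidean_space set"
  assumes "p \<in> proj C (p + w)" "c \<in> C"
  shows "2 * inner w (c - p) \<le> (norm (c - p))\<^sup>2"
proof -
  have "norm w \<le> norm (w - (c - p))"
    using assms by (auto simp: proj_def algebra_simps)
  then have "(norm w)\<^sup>2 \<le> (norm (w - (c - p)))\<^sup>2" by (simp add: power_mono)
  then show ?thesis by (simp add: power2_norm_eq_inner inner_diff algebra_simps inner_commute)
qed

lemma proj_limit: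
  fixes C :: "'a::euclidean_space set"
  assumes "closed C" "\<And>k. P k \<in> proj C (Y k)" "P \<longlonglongrightarrow> p" "Y \<longlonglongrightarrow> y"
  shows "p \<in> proj C y"
proof -
  have "p \<in> C" using assms by (auto simp: proj_def intro: closed_sequentially[OF \<open>closed C\<close>])
  moreover have "norm (y - p) \<le> norm (y - c)" if "c \<in> C" for c
    using assms that
    by (intro LIMSEQ_le[of "\<lambda>k. norm (Y k - P k)" _ "\<lambda>k. norm (Y k - c)"] tendsto_intros)
      (auto simp: proj_def)
  ultimately show ?thesis by (simp add: proj_def)
qed

lemma proj_ray_shrink:
  fixes C :: "'a::euclidean_space set"
  assumes "p \<in> proj C (p + t *\<^sub>R z)" "0 \<le> s" "s \<le> t"
  shows "p \<in> proj C (p + s *\<^sub>R z)"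
proof -
  have "norm (s *\<^sub>R z) \<le> norm (p + s *\<^sub>R z - y)" if "y \<in> C" for y
  proof -
    have "t * norm z \<le> norm (p + t *\<^sub>R z - y)"
      using assms that by (auto simp: proj_def)
    also have "\<dots> \<le> norm (p + s *\<^sub>R z - y) + norm ((t - s) *\<^sub>R z)"
      using norm_triangle_ineq[of "p + s *\<^sub>R z - y" "(t - s) *\<^sub>R z"]
      by (simp add: algebra_simps)
    also have "norm ((t - s) *\<^sub>R z) = (t - s) * norm z" using assms by simp
    finally show ?thesis using assms by (simp add: algebra_simps)
  qed
  then show ?thesis using assms by (auto simp: proj_def)
qed

lemma proj_continuous_at_unique:
  fixes C :: "'a::euclidean_space set"
  assumes "closed C" and unique: "\<And>q'. q' \<in> proj C z \<Longrightarrow> q' = q" and q: "q \<in> proj C z"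
    and "e > 0"
  obtains \<delta> where "\<delta> > 0" "\<And>x q'. norm (x - z) < \<delta> \<Longrightarrow> q' \<in> proj C x \<Longrightarrow> norm (q' - q) < e"
proof -
  define D where "D = norm (z - q)"
  define K where "K = cball z (D + 1) \<inter> C \<inter> {c. e \<le> norm (c - q)}"
  have "compact K" unfolding K_def
    by (intro compact_Int_closed closed_Int compact_cball \<open>closed C\<close> closed_Collect_le continuous_intros)
  have "\<exists>\<delta>>0. \<forall>c\<in>K. D + \<delta> \<le> norm (z - c)"
  proof (cases "K = {}")
    case False
    have "continuous_on K (\<lambda>c. norm (z - c))" by (intro continuous_intros)
    then obtain k where k: "k \<in> K" and kmin: "\<And>c. c \<in> K \<Longrightarrow> norm (z - k) \<le> norm (z - c)"
      using continuous_attains_inf[OF \<open>compact K\<close> False] by blast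
    have "k \<notin> proj C z" using unique k \<open>e > 0\<close> by (force simp: K_def)
    then obtain y where "y \<in> C" "norm (z - y) < norm (z - k)" using k by (auto simp: proj_def K_def not_le)
    moreover have "D \<le> norm (z - y)" using q \<open>y \<in> C\<close> by (auto simp: proj_def D_def)
    ultimately show ?thesis using kmin by (intro exI[of _ "norm (z - k) - D"]) auto
  qed (auto intro: exI[of _ 1])
  then obtain \<delta> where "\<delta> > 0" and \<delta>: "\<And>c. c \<in> K \<Longrightarrow> D + \<delta> \<le> norm (z - c)" by blast
  show ?thesis
  proof (rule that[of "min (1/2) (\<delta>/2)"])
    fix x q' assume xz: "norm (x - z) < min (1/2) (\<delta>/2)" and q': "q' \<in> proj C x"
    have "q' \<in> C" "norm (x - q') \<le> norm (x - q)" using q' q by (auto simp: proj_def)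
    have "norm (z - q') \<le> norm (x - q') + norm (x - z)"
      using norm_triangle_ineq[of "x - q'" "z - x"] by (simp add: norm_minus_commute)
    also have "\<dots> \<le> D + 2 * norm (x - z)"
      using \<open>norm (x - q') \<le> norm (x - q)\<close> norm_triangle_ineq[of "x - z" "z - q"] by (simp add: D_def)
    finally have "norm (z - q') \<le> D + 2 * norm (x - z)" .
    then show "norm (q' - q) < e"
      using \<delta>[of q'] xz \<open>q' \<in> C\<close> by (force simp: K_def dist_norm)
  qed (use \<open>\<delta> > 0\<close> in simp)
qed

lemma infdist_grows_along_unique_proj:
  fixes C :: "'a::euclidean_space set"
  assumes "closed C" and unique: "\<And>q'. q' \<in> proj C z \<Longrightarrow> q' = q" and q: "q \<in> proj C z"
    and "z \<noteq> q" "0 < \<epsilon>" "\<epsilon> < 1"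
  obtains h0 where "h0 > 0"
    "\<And>h. 0 < h \<Longrightarrow> h \<le> h0 \<Longrightarrow>
       infdist z C + (1 - \<epsilon>) * h \<le> infdist (z + (h / norm (z - q)) *\<^sub>R (z - q)) C"
proof -
  define D where "D = norm (z - q)"
  define \<nu> where "\<nu> = (1 / D) *\<^sub>R (z - q)"
  have "D > 0" using \<open>z \<noteq> q\<close> by (simp add: D_def)
  have "norm \<nu> = 1" "inner \<nu> (z - q) = D"
    using \<open>D > 0\<close> by (simp_all add: \<nu>_def D_def power2_norm_eq_inner[symmetric] power2_eq_square)
  have "C \<noteq> {}" using q by (auto simp: proj_def)
  obtain \<delta> where "\<delta> > 0" and \<delta>: "\<And>x q'. norm (x - z) < \<delta> \<Longrightarrow> q' \<in> proj C x \<Longrightarrow> norm (q' - q) < \<epsilon> * D / 2"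
    using proj_continuous_at_unique[OF \<open>closed C\<close> unique q, of "\<epsilon> * D / 2"] \<open>0 < \<epsilon>\<close> \<open>D > 0\<close> by auto
  show ?thesis
  proof (rule that[of "min (\<delta>/2) (\<epsilon> * D)"])
    fix h assume "0 < h" "h \<le> min (\<delta>/2) (\<epsilon> * D)"
    define y where "y = z + h *\<^sub>R \<nu>"
    obtain q' where q': "q' \<in> proj C y" using proj_nonempty[OF \<open>closed C\<close> \<open>C \<noteq> {}\<close>] by blast
    have "norm (y - z) < \<delta>" using \<open>0 < h\<close> \<open>h \<le> min (\<delta>/2) (\<epsilon> * D)\<close> \<open>\<delta> > 0\<close> \<open>norm \<nu> = 1\<close>
      by (simp add: y_def)
    then have "norm (q - q') < \<epsilon> * D / 2" using \<delta>[OF _ q'] by (simp add: norm_minus_commute)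
    moreover have "- norm (q - q') \<le> inner \<nu> (q - q')"
      using Cauchy_Schwarz_ineq2[of \<nu> "q - q'"] \<open>norm \<nu> = 1\<close> by auto
    ultimately have inner_lb: "D - \<epsilon> * D / 2 \<le> inner \<nu> (z - q')"
      using \<open>inner \<nu> (z - q) = D\<close> by (simp add: inner_diff_right)
    have "D \<le> norm (z - q')" using q q' by (simp add: proj_def D_def)
    then have "D\<^sup>2 + 2 * h * (D - \<epsilon> * D / 2) + h\<^sup>2 \<le> (norm (z - q'))\<^sup>2 + 2 * h * inner \<nu> (z - q') + h\<^sup>2"
      using inner_lb \<open>0 < h\<close> \<open>D > 0\<close> by (intro add_mono power_mono mult_left_mono) auto
    also have "\<dots> = (norm ((z - q') + h *\<^sub>R \<nu>))\<^sup>2"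
      unfolding power2_norm_add using \<open>norm \<nu> = 1\<close> \<open>0 < h\<close> by (simp add: inner_commute)
    also have "(z - q') + h *\<^sub>R \<nu> = y - q'" by (simp add: y_def)
    finally have sq: "D\<^sup>2 + 2 * h * (D - \<epsilon> * D / 2) + h\<^sup>2 \<le> (norm (y - q'))\<^sup>2" .
    have "(1 - \<epsilon>)\<^sup>2 * h\<^sup>2 \<le> h\<^sup>2"
      using \<open>0 < \<epsilon>\<close> \<open>\<epsilon> < 1\<close> by (intro mult_left_le_one_le) (auto simp: power_le_one)
    moreover have "0 \<le> \<epsilon> * h * D" using \<open>0 < \<epsilon>\<close> \<open>0 < h\<close> \<open>D > 0\<close> by simp
    ultimately have "(D + (1 - \<epsilon>) * h)\<^sup>2 \<le> D\<^sup>2 + 2 * h * (D - \<epsilon> * D / 2) + h\<^sup>2"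
      by (simp add: power2_eq_square algebra_simps)
    with sq have "(D + (1 - \<epsilon>) * h)\<^sup>2 \<le> (norm (y - q'))\<^sup>2" by linarith
    then have "D + (1 - \<epsilon>) * h \<le> infdist y C"
      using infdist_eq_norm_proj[OF q'] by (auto intro: power2_le_imp_le)
    then show "infdist z C + (1 - \<epsilon>) * h \<le> infdist (z + (h / norm (z - q)) *\<^sub>R (z - q)) C"
      using infdist_eq_norm_proj[OF q] by (simp add: y_def \<nu>_def D_def)
  qed (use \<open>\<delta> > 0\<close> \<open>0 < \<epsilon>\<close> \<open>D > 0\<close> in simp)
qed

lemma infdist_growth_in_ball_approx:
  fixes C :: "'a::euclidean_space set"
  assumes "closed C" and unique: "\<And>y. y \<in> cball y0 \<delta> \<Longrightarrow> \<exists>!q. q \<in> proj C y"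
    and "0 < infdist y0 C" "0 \<le> \<delta>" "0 < \<epsilon>" "\<epsilon> < 1"
  shows "\<exists>z\<in>cball y0 \<delta>. infdist y0 C + (1 - \<epsilon>) * \<delta> \<le> infdist z C"
proof -
  \<comment> \<open>If the largest admissible radius S were below \<delta>, pushing a maximiser of the distance on
    cball y0 S away from its unique projection would admit a larger radius.\<close>
  define T where "T = infdist y0 C"
  define B where "B = {s \<in> {0..\<delta>}. \<exists>z\<in>cball y0 s. T + (1 - \<epsilon>) * s \<le> infdist z C}"
  have "0 \<in> B" using \<open>0 \<le> \<delta>\<close> by (auto simp: B_def T_def intro!: bexI[of _ y0])
  have "bdd_above B" by (auto simp: B_def bdd_above_def)
  define S where "S = Sup B"
  have "0 \<le> S" "S \<le> \<delta>"
    using cSup_upper[OF \<open>0 \<in> B\<close> \<open>bdd_above B\<close>] \<open>0 \<in> B\<close> by (auto simp: S_def B_def intro!: cSup_least)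
  have "continuous_on (cball y0 S) (\<lambda>z. infdist z C)" by (intro continuous_intros)
  then obtain zS where zS: "zS \<in> cball y0 S" and zS_max: "\<And>z. z \<in> cball y0 S \<Longrightarrow> infdist z C \<le> infdist zS C"
    using continuous_attains_sup[OF compact_cball] \<open>0 \<le> S\<close> by (metis cball_eq_empty not_less)
  have "s \<le> (infdist zS C - T) / (1 - \<epsilon>)" if "s \<in> B" for s
  proof -
    obtain z where "z \<in> cball y0 s" "T + (1 - \<epsilon>) * s \<le> infdist z C" using \<open>s \<in> B\<close> by (auto simp: B_def)
    moreover have "s \<le> S" using cSup_upper[OF \<open>s \<in> B\<close> \<open>bdd_above B\<close>] by (simp add: S_def)
    ultimately have "T + (1 - \<epsilon>) * s \<le> infdist zS C"
      using zS_max[of z] by (meson mem_cball order_trans)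
    then show ?thesis using \<open>\<epsilon> < 1\<close> by (simp add: field_simps)
  qed
  then have "S \<le> (infdist zS C - T) / (1 - \<epsilon>)" unfolding S_def using \<open>0 \<in> B\<close> by (intro cSup_least) auto
  then have zS_growth: "T + (1 - \<epsilon>) * S \<le> infdist zS C" using \<open>\<epsilon> < 1\<close> by (simp add: field_simps)
  show ?thesis
  proof (cases "S = \<delta>")
    case True then show ?thesis using zS zS_growth by (auto simp: T_def)
  next
    case False
    then have "S < \<delta>" using \<open>S \<le> \<delta>\<close> by simp
    have "zS \<in> cball y0 \<delta>" using zS \<open>S \<le> \<delta>\<close> by auto
    then obtain q where q: "q \<in> proj C zS" and q_unique: "\<And>q'. q' \<in> proj C zS \<Longrightarrow> q' = q"
      using unique by blast
    have "0 < T + (1 - \<epsilon>) * S"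
      using \<open>0 < infdist y0 C\<close> \<open>0 \<le> S\<close> \<open>\<epsilon> < 1\<close> by (intro add_pos_nonneg) (auto simp: T_def)
    then have "zS \<noteq> q" using zS_growth infdist_eq_norm_proj[OF q] by auto
    obtain h0 where "h0 > 0" and h0: "\<And>h. 0 < h \<Longrightarrow> h \<le> h0 \<Longrightarrow>
        infdist zS C + (1 - \<epsilon>) * h \<le> infdist (zS + (h / norm (zS - q)) *\<^sub>R (zS - q)) C"
      using infdist_grows_along_unique_proj[OF \<open>closed C\<close> q_unique q \<open>zS \<noteq> q\<close>] \<open>0 < \<epsilon>\<close> \<open>\<epsilon> < 1\<close>
      by blast
    define h where "h = min h0 (\<delta> - S)"
    define z where "z = zS + (h / norm (zS - q)) *\<^sub>R (zS - q)"
    have "0 < h" "h \<le> h0" "S + h \<le> \<delta>" using \<open>h0 > 0\<close> \<open>S < \<delta>\<close> by (auto simp: h_def)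
    have "norm (z - zS) = h" using \<open>zS \<noteq> q\<close> \<open>0 < h\<close> by (simp add: z_def)
    then have "z \<in> cball y0 (S + h)"
      using zS norm_triangle_ineq[of "zS - y0" "z - zS"] by (simp add: dist_norm norm_minus_commute)
    moreover have "T + (1 - \<epsilon>) * (S + h) \<le> infdist z C"
      using h0[OF \<open>0 < h\<close> \<open>h \<le> h0\<close>] zS_growth by (simp add: z_def algebra_simps)
    ultimately have "S + h \<in> B" using \<open>0 \<le> S\<close> \<open>0 < h\<close> \<open>S + h \<le> \<delta>\<close> by (auto simp: B_def)
    then have "S + h \<le> S" using cSup_upper[OF _ \<open>bdd_above B\<close>] unfolding S_def by blast
    then show ?thesis using \<open>0 < h\<close> by simp
  qed
qed

lemma infdist_growth_in_ball:
  fixes C :: "'a::euclidean_space set"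
  assumes "closed C" and unique: "\<And>y. y \<in> cball y0 \<delta> \<Longrightarrow> \<exists>!q. q \<in> proj C y"
    and "0 < infdist y0 C" "0 \<le> \<delta>"
  obtains z where "z \<in> cball y0 \<delta>" "infdist y0 C + \<delta> \<le> infdist z C"
proof -
  have "continuous_on (cball y0 \<delta>) (\<lambda>z. infdist z C)" by (intro continuous_intros)
  then obtain z where z: "z \<in> cball y0 \<delta>" and z_max: "\<And>z'. z' \<in> cball y0 \<delta> \<Longrightarrow> infdist z' C \<le> infdist z C"
    using continuous_attains_sup[OF compact_cball] \<open>0 \<le> \<delta>\<close> by (metis cball_eq_empty not_less)
  have "infdist y0 C + \<delta> \<le> infdist z C"
  proof (rule real_le_if_le_add_small[of 1 \<delta>])
    fix \<epsilon> :: real assume "0 < \<epsilon>" "\<epsilon> < 1"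
    then obtain z' where "z' \<in> cball y0 \<delta>" "infdist y0 C + (1 - \<epsilon>) * \<delta> \<le> infdist z' C"
      using infdist_growth_in_ball_approx[OF assms] by blast
    then show "infdist y0 C + \<delta> \<le> infdist z C + \<delta> * \<epsilon>" using z_max[of z'] by (simp add: algebra_simps)
  qed (use \<open>0 \<le> \<delta>\<close> in auto)
  then show ?thesis using that z by blast
qed

lemma proj_ray_step:
  fixes C :: "'a::euclidean_space set"
  assumes "closed C" and unique: "\<And>y. y \<in> cball (p + T *\<^sub>R \<zeta>) \<delta> \<Longrightarrow> \<exists>!q. q \<in> proj C y"
    and p: "p \<in> proj C (p + T *\<^sub>R \<zeta>)" and "norm \<zeta> = 1" "T > 0" "0 \<le> \<delta>"
  shows "p \<in> proj C (p + (T + \<delta>) *\<^sub>R \<zeta>)"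
proof -
  define y0 where "y0 = p + T *\<^sub>R \<zeta>"
  have "p \<in> C" "norm (y0 - p) = T" using p \<open>norm \<zeta> = 1\<close> \<open>T > 0\<close> by (auto simp: proj_def y0_def)
  have "infdist y0 C = T" using infdist_eq_norm_proj[OF p] \<open>norm \<zeta> = 1\<close> \<open>T > 0\<close> by (simp add: y0_def)
  then obtain z where z: "z \<in> cball y0 \<delta>" and z_far: "T + \<delta> \<le> infdist z C"
    using infdist_growth_in_ball[OF \<open>closed C\<close> unique[folded y0_def]] \<open>T > 0\<close> \<open>0 \<le> \<delta>\<close> by metis
  have "infdist z C \<le> norm (z - p)" using infdist_le[OF \<open>p \<in> C\<close>] by (simp add: dist_norm)
  moreover have "norm (z - p) \<le> norm (z - y0) + norm (y0 - p)"
    using norm_triangle_ineq[of "z - y0" "y0 - p"] by simp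
  moreover have "norm (z - y0) \<le> \<delta>" using z by (simp add: dist_norm norm_minus_commute)
  ultimately have "norm (z - y0) = \<delta>" and z_dist: "norm (z - p) = T + \<delta>"
    using z_far \<open>norm (y0 - p) = T\<close> by linarith+
  then have "norm ((z - y0) + (y0 - p)) = norm (z - y0) + norm (y0 - p)" using \<open>norm (y0 - p) = T\<close> by simp
  then have "norm (z - y0) *\<^sub>R (y0 - p) = norm (y0 - p) *\<^sub>R (z - y0)" by (rule norm_triangle_eq[THEN iffD1])
  then have "T *\<^sub>R (z - y0) = T *\<^sub>R (\<delta> *\<^sub>R \<zeta>)"
    using \<open>norm (z - y0) = \<delta>\<close> \<open>norm (y0 - p) = T\<close> by (simp add: y0_def mult.commute)
  then have "z - y0 = \<delta> *\<^sub>R \<zeta>" using \<open>T > 0\<close> by (metis scaleR_cancel_left less_irrefl)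
  then have "z = p + (T + \<delta>) *\<^sub>R \<zeta>" by (simp add: y0_def algebra_simps)
  then show ?thesis using \<open>p \<in> C\<close> z_dist z_far by (simp add: proj_iff_infdist)
qed

lemma proj_ray_extend:
  fixes C :: "'a::euclidean_space set"
  assumes "closed C" and unique: "\<And>y. y \<in> cball p R \<Longrightarrow> \<exists>!q. q \<in> proj C y"
    and p: "p \<in> proj C (p + T *\<^sub>R \<zeta>)" and "norm \<zeta> = 1" "T > 0" "R > 0"
  shows "p \<in> proj C (p + R *\<^sub>R \<zeta>)"
proof -
  define A where "A = {t \<in> {0..R}. p \<in> proj C (p + t *\<^sub>R \<zeta>)}"
  have "p \<in> C" using p by (simp add: proj_def)
  have "A = {0..R} \<inter> {t. norm ((p + t *\<^sub>R \<zeta>) - p) \<le> infdist (p + t *\<^sub>R \<zeta>) C}"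
    unfolding A_def proj_iff_infdist using \<open>p \<in> C\<close> by auto
  then have "closed A" by (auto intro!: closed_Int closed_Collect_le continuous_intros)
  have "min T R \<in> A" unfolding A_def using proj_ray_shrink[OF p, of "min T R"] \<open>T > 0\<close> \<open>R > 0\<close> by auto
  have "bdd_above A" by (auto simp: A_def bdd_above_def)
  define S where "S = Sup A"
  have "S \<in> A" unfolding S_def using closed_contains_Sup[OF _ \<open>bdd_above A\<close> \<open>closed A\<close>] \<open>min T R \<in> A\<close> by auto
  have "S \<le> R" "0 < S"
    using \<open>S \<in> A\<close> cSup_upper[OF \<open>min T R \<in> A\<close> \<open>bdd_above A\<close>] \<open>T > 0\<close> \<open>R > 0\<close> by (auto simp: A_def S_def)
  have "cball (p + S *\<^sub>R \<zeta>) (R - S) \<subseteq> cball p R"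
    using \<open>norm \<zeta> = 1\<close> \<open>0 < S\<close> by (intro cball_subset_cball_iff[THEN iffD2]) (auto simp: dist_norm)
  then have "p \<in> proj C (p + (S + (R - S)) *\<^sub>R \<zeta>)"
    using \<open>S \<in> A\<close> \<open>S \<le> R\<close> unique
    by (intro proj_ray_step[OF \<open>closed C\<close> _ _ \<open>norm \<zeta> = 1\<close> \<open>0 < S\<close>]) (auto simp: A_def subset_iff)
  then show ?thesis by simp
qed

lemma proj_extend_to_radius:
  fixes C :: "'a::euclidean_space set"
  assumes "closed C" and unique: "\<And>y. y \<in> cball x (2 * R) \<Longrightarrow> \<exists>!q. q \<in> proj C y"
    and "R > 0" and P: "P \<in> proj C y" and "P \<noteq> y" "norm (P - x) \<le> R"
  shows "P \<in> proj C (P + R *\<^sub>R sgn (y - P))"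
proof -
  have "cball P R \<subseteq> cball x (2 * R)"
    using \<open>norm (P - x) \<le> R\<close>
    by (intro cball_subset_cball_iff[THEN iffD2]) (auto simp: dist_norm norm_minus_commute)
  moreover have "P + norm (y - P) *\<^sub>R sgn (y - P) = y" using \<open>P \<noteq> y\<close> by (simp add: sgn_div_norm)
  ultimately show ?thesis
    using proj_ray_extend[OF \<open>closed C\<close> _ _ _ _ \<open>R > 0\<close>, where \<zeta>="sgn (y - P)" and T="norm (y - P)"]
      unique P \<open>P \<noteq> y\<close> by (simp add: norm_sgn subset_iff)
qed

section \<open>The Frechet normal cone\<close>

definition frechet_normal_cone :: "'a::real_inner set \<Rightarrow> 'a \<Rightarrow> 'a set" where
  "frechet_normal_cone C x =
     {n. \<forall>e>0. \<exists>\<delta>>0. \<forall>c\<in>C. norm (c - x) < \<delta> \<longrightarrow> inner n (c - x) \<le> e * norm (c - x)}"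

lemma frechet_normal_coneD:
  assumes "n \<in> frechet_normal_cone C x" "e > 0"
  obtains \<delta> where "\<delta> > 0" "\<And>c. c \<in> C \<Longrightarrow> norm (c - x) < \<delta> \<Longrightarrow> inner n (c - x) \<le> e * norm (c - x)"
  using assms by (auto simp: frechet_normal_cone_def)

lemma convex_cone_frechet_normal_cone: "convex_cone (frechet_normal_cone C x)"
  unfolding convex_cone_iff
proof (intro conjI ballI allI impI)
  show "0 \<in> frechet_normal_cone C x" by (auto simp: frechet_normal_cone_def intro: exI[of _ 1])
next
  fix n m assume n: "n \<in> frechet_normal_cone C x" and m: "m \<in> frechet_normal_cone C x"
  show "n + m \<in> frechet_normal_cone C x" unfolding frechet_normal_cone_def
  proof (intro CollectI allI impI)
    fix e :: real assume "e > 0"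
    obtain \<delta>1 \<delta>2 where "\<delta>1 > 0" "\<delta>2 > 0"
      and "\<And>c. c \<in> C \<Longrightarrow> norm (c - x) < \<delta>1 \<Longrightarrow> inner n (c - x) \<le> e / 2 * norm (c - x)"
      and "\<And>c. c \<in> C \<Longrightarrow> norm (c - x) < \<delta>2 \<Longrightarrow> inner m (c - x) \<le> e / 2 * norm (c - x)"
      using frechet_normal_coneD[OF n, of "e / 2"] frechet_normal_coneD[OF m, of "e / 2"] \<open>e > 0\<close>
      by (metis half_gt_zero)
    then show "\<exists>\<delta>>0. \<forall>c\<in>C. norm (c - x) < \<delta> \<longrightarrow> inner (n + m) (c - x) \<le> e * norm (c - x)"
      by (intro exI[of _ "min \<delta>1 \<delta>2"]) (fastforce simp: inner_add_left)
  qed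
next
  fix n and a :: real assume n: "n \<in> frechet_normal_cone C x" and "0 \<le> a"
  show "a *\<^sub>R n \<in> frechet_normal_cone C x" unfolding frechet_normal_cone_def
  proof (intro CollectI allI impI)
    fix e :: real assume "e > 0"
    then obtain \<delta> where "\<delta> > 0"
      and \<delta>: "\<And>c. c \<in> C \<Longrightarrow> norm (c - x) < \<delta> \<Longrightarrow> inner n (c - x) \<le> e / (a + 1) * norm (c - x)"
      using frechet_normal_coneD[OF n, of "e / (a + 1)"] \<open>0 \<le> a\<close> by auto
    have "a * inner n (c - x) \<le> e * norm (c - x)" if "c \<in> C" "norm (c - x) < \<delta>" for c
    proof -
      have "a * inner n (c - x) \<le> a * (e / (a + 1)) * norm (c - x)"
        using mult_left_mono[OF \<delta>[OF that] \<open>0 \<le> a\<close>] by (simp add: mult.assoc)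
      also have "\<dots> \<le> e * norm (c - x)"
        using \<open>0 \<le> a\<close> \<open>e > 0\<close> by (intro mult_right_mono) (auto simp: field_simps)
      finally show ?thesis .
    qed
    then show "\<exists>\<delta>>0. \<forall>c\<in>C. norm (c - x) < \<delta> \<longrightarrow> inner (a *\<^sub>R n) (c - x) \<le> e * norm (c - x)"
      using \<open>\<delta> > 0\<close> by auto
  qed
qed

lemma closed_frechet_normal_cone:
  fixes C :: "'a::euclidean_space set"
  shows "closed (frechet_normal_cone C x)"
proof -
  have "n \<in> frechet_normal_cone C x" if n: "n \<in> closure (frechet_normal_cone C x)" for n
    unfolding frechet_normal_cone_def
  proof (intro CollectI allI impI)
    fix e :: real assume "e > 0"
    obtain m where m: "m \<in> frechet_normal_cone C x" "dist m n < e / 2"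
      using n \<open>e > 0\<close> by (metis closure_approachable half_gt_zero)
    obtain \<delta> where "\<delta> > 0"
      and \<delta>: "\<And>c. c \<in> C \<Longrightarrow> norm (c - x) < \<delta> \<Longrightarrow> inner m (c - x) \<le> e / 2 * norm (c - x)"
      using frechet_normal_coneD[OF m(1), of "e / 2"] \<open>e > 0\<close> by auto
    have "inner n (c - x) \<le> e * norm (c - x)" if "c \<in> C" "norm (c - x) < \<delta>" for c
    proof -
      have "inner (n - m) (c - x) \<le> norm (n - m) * norm (c - x)" by (rule norm_cauchy_schwarz)
      also have "\<dots> \<le> e / 2 * norm (c - x)"
        using m(2) by (intro mult_right_mono) (auto simp: dist_norm norm_minus_commute)
      finally show ?thesis using \<delta>[OF that] by (simp add: inner_diff_left)
    qed
    then show "\<exists>\<delta>>0. \<forall>c\<in>C. norm (c - x) < \<delta> \<longrightarrow> inner n (c - x) \<le> e * norm (c - x)"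
      using \<open>\<delta> > 0\<close> by auto
  qed
  then show ?thesis using closure_subset_eq by blast
qed

lemma closed_convex_cone_bipolar:
  fixes K :: "'a::euclidean_space set"
  assumes "closed K" "convex_cone K"
    and polar: "\<And>d. (\<And>n. n \<in> K \<Longrightarrow> inner n d \<le> 0) \<Longrightarrow> inner m d \<le> 0"
  shows "m \<in> K"
proof (rule ccontr)
  assume "m \<notin> K"
  moreover have "convex K" using \<open>convex_cone K\<close> by (simp add: convex_cone_def)
  ultimately obtain a b where "inner a m < b" and sep: "\<And>n. n \<in> K \<Longrightarrow> b < inner a n"
    using separating_hyperplane_closed_point[OF _ \<open>closed K\<close>] by blast
  have "b < 0" using sep[of 0] \<open>convex_cone K\<close> by (simp add: convex_cone_iff)
  have "0 \<le> inner a n" if "n \<in> K" for n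
  proof (rule ccontr)
    assume "\<not> 0 \<le> inner a n"
    then have "(b / inner a n) *\<^sub>R n \<in> K" "inner a ((b / inner a n) *\<^sub>R n) = b"
      using \<open>b < 0\<close> \<open>n \<in> K\<close> \<open>convex_cone K\<close> by (auto simp: convex_cone_iff zero_le_divide_iff)
    then show False using sep by fastforce
  qed
  then have "inner m (- a) \<le> 0" by (intro polar) (simp add: inner_commute)
  then show False using \<open>inner a m < b\<close> \<open>b < 0\<close> by (simp add: inner_commute)
qed

lemma proximal_ineq_imp_frechet_normal:
  assumes "\<And>c. c \<in> C \<Longrightarrow> 2 * inner w (c - x) \<le> (norm (c - x))\<^sup>2"
  shows "w \<in> frechet_normal_cone C x"
  unfolding frechet_normal_cone_def
proof (intro CollectI allI impI)
  fix e :: real assume "e > 0"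
  have "inner w (c - x) \<le> e * norm (c - x)" if "c \<in> C" "norm (c - x) < 2 * e" for c
  proof -
    have "2 * inner w (c - x) \<le> norm (c - x) * norm (c - x)"
      using assms[OF \<open>c \<in> C\<close>] by (simp add: power2_eq_square)
    also have "\<dots> \<le> 2 * e * norm (c - x)" using that by (intro mult_right_mono) auto
    finally show ?thesis by simp
  qed
  then show "\<exists>\<delta>>0. \<forall>c\<in>C. norm (c - x) < \<delta> \<longrightarrow> inner w (c - x) \<le> e * norm (c - x)"
    using \<open>e > 0\<close> by (intro exI[of _ "2 * e"]) auto
qed

lemma proximal_limit_in_frechet_normal_cone:
  assumes "\<nu> \<longlonglongrightarrow> l" "P \<longlonglongrightarrow> x" "R > 0"
    and proximal: "\<And>k c. c \<in> C \<Longrightarrow> 2 * inner (R *\<^sub>R \<nu> k) (c - P k) \<le> (norm (c - P k))\<^sup>2"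
  shows "l \<in> frechet_normal_cone C x"
proof -
  have "2 * inner (R *\<^sub>R l) (c - x) \<le> (norm (c - x))\<^sup>2" if "c \<in> C" for c
    using proximal[OF that] assms(1,2)
    by (intro LIMSEQ_le[of "\<lambda>k. 2 * inner (R *\<^sub>R \<nu> k) (c - P k)" _ "\<lambda>k. (norm (c - P k))\<^sup>2"]
        tendsto_intros) auto
  then have "(1 / R) *\<^sub>R (R *\<^sub>R l) \<in> frechet_normal_cone C x"
    by (intro convex_cone_scaleR[OF convex_cone_frechet_normal_cone] proximal_ineq_imp_frechet_normal)
      (use \<open>R > 0\<close> in auto)
  then show ?thesis using \<open>R > 0\<close> by simp
qed

lemma proj_near_frechet_normal_ray:
  fixes C :: "'a::euclidean_space set"
  assumes "x \<in> C" "norm \<zeta> = 1" "t > 0" "0 \<le> e" and p: "p \<in> proj C (x + t *\<^sub>R \<zeta>)"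
    and normal: "\<And>c. c \<in> C \<Longrightarrow> norm (c - x) \<le> 2 * t \<Longrightarrow> inner \<zeta> (c - x) \<le> e * norm (c - x)"
  shows "norm (p - x) \<le> 2 * t * e"
proof -
  have "p \<in> C" and "norm (t *\<^sub>R \<zeta> - (p - x)) \<le> t"
    using p \<open>x \<in> C\<close> \<open>norm \<zeta> = 1\<close> \<open>t > 0\<close> by (auto simp: proj_def algebra_simps)
  moreover have "norm (p - x) \<le> norm (t *\<^sub>R \<zeta>) + norm (t *\<^sub>R \<zeta> - (p - x))"
    using norm_triangle_ineq4[of "t *\<^sub>R \<zeta>" "t *\<^sub>R \<zeta> - (p - x)"] by simp
  ultimately have "norm (p - x) \<le> 2 * t" using \<open>norm \<zeta> = 1\<close> \<open>t > 0\<close> by simp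
  have "(norm (t *\<^sub>R \<zeta> - (p - x)))\<^sup>2 \<le> t\<^sup>2"
    using \<open>norm (t *\<^sub>R \<zeta> - (p - x)) \<le> t\<close> by (simp add: power_mono)
  then have "(norm (p - x))\<^sup>2 \<le> 2 * t * inner \<zeta> (p - x)"
    using power2_norm_diff[of "t *\<^sub>R \<zeta>" "p - x"] \<open>norm \<zeta> = 1\<close> by simp
  also have "\<dots> \<le> 2 * t * (e * norm (p - x))"
    using normal[OF \<open>p \<in> C\<close> \<open>norm (p - x) \<le> 2 * t\<close>] \<open>t > 0\<close> by simp
  finally have "norm (p - x) * norm (p - x) \<le> (2 * t * e) * norm (p - x)"
    by (simp add: power2_eq_square mult_ac)
  then show ?thesis using \<open>t > 0\<close> \<open>0 \<le> e\<close> by (cases "p = x") auto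
qed

lemma frechet_normal_imp_proximal:
  fixes C :: "'a::euclidean_space set"
  assumes "closed C" and unique: "\<And>y. y \<in> cball x (2 * R) \<Longrightarrow> \<exists>!q. q \<in> proj C y"
    and "x \<in> C" "R > 0" "\<zeta> \<in> frechet_normal_cone C x" "norm \<zeta> = 1"
  shows "x \<in> proj C (x + R *\<^sub>R \<zeta>)"
proof -
  \<comment> \<open>For small t the nearest point p to x + t\<zeta> is O(e t)-close to x and the residual direction
    is 4e-close to \<zeta>; since p stays nearest along the residual ray up to length R,
    every c \<in> C is at distance at least R - 5Re from x + R\<zeta>.\<close>
  have "R \<le> norm (x + R *\<^sub>R \<zeta> - c)" if "c \<in> C" for c
  proof (rule real_le_if_le_add_small[of "1/4" "5 * R"])
    fix e :: real assume "0 < e" "e < 1/4"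
    obtain \<delta> where "\<delta> > 0"
      and normal: "\<And>c. c \<in> C \<Longrightarrow> norm (c - x) < \<delta> \<Longrightarrow> inner \<zeta> (c - x) \<le> e * norm (c - x)"
      using frechet_normal_coneD[OF \<open>\<zeta> \<in> frechet_normal_cone C x\<close> \<open>0 < e\<close>] by blast
    define t where "t = min (R / 2) (\<delta> / 3)"
    have "t > 0" "t \<le> R / 2" "3 * t \<le> \<delta>" using \<open>R > 0\<close> \<open>\<delta> > 0\<close> by (auto simp: t_def)
    obtain p where p: "p \<in> proj C (x + t *\<^sub>R \<zeta>)" using proj_nonempty[OF \<open>closed C\<close>] \<open>x \<in> C\<close> by blast
    have "norm (p - x) \<le> 2 * t * e"
      using \<open>t > 0\<close> \<open>3 * t \<le> \<delta>\<close> \<open>0 < e\<close>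
      by (intro proj_near_frechet_normal_ray[OF \<open>x \<in> C\<close> \<open>norm \<zeta> = 1\<close> _ _ p] normal) auto
    define w where "w = x + t *\<^sub>R \<zeta> - p"
    have "norm (w - t *\<^sub>R \<zeta>) = norm (p - x)" by (simp add: w_def norm_minus_commute)
    moreover have "t - norm (w - t *\<^sub>R \<zeta>) \<le> norm w"
      using norm_triangle_ineq2[of "t *\<^sub>R \<zeta>" "t *\<^sub>R \<zeta> - w"] \<open>norm \<zeta> = 1\<close> \<open>t > 0\<close>
      by (simp add: norm_minus_commute)
    moreover have "2 * t * e < t" using \<open>t > 0\<close> \<open>e < 1/4\<close> by simp
    ultimately have "w \<noteq> 0" using \<open>norm (p - x) \<le> 2 * t * e\<close> by auto
    moreover have "norm (p - x) \<le> R"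
      using \<open>norm (p - x) \<le> 2 * t * e\<close> \<open>2 * t * e < t\<close> \<open>t \<le> R / 2\<close> \<open>R > 0\<close> by linarith
    ultimately have "p \<in> proj C (p + R *\<^sub>R sgn w)"
      using proj_extend_to_radius[where x=x and R=R, OF \<open>closed C\<close> unique \<open>R > 0\<close> p] by (simp add: w_def)
    have "2 * norm (p - x) / t \<le> 4 * e"
      using \<open>norm (p - x) \<le> 2 * t * e\<close> \<open>t > 0\<close> by (simp add: divide_le_eq mult_ac)
    then have "norm (sgn w - \<zeta>) \<le> 4 * e"
      using norm_sgn_diff_le[OF \<open>w \<noteq> 0\<close> \<open>t > 0\<close> \<open>norm \<zeta> = 1\<close>] \<open>norm (w - t *\<^sub>R \<zeta>) = norm (p - x)\<close>
      by simp
    have "R \<le> norm (p + R *\<^sub>R sgn w - c)"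
      using \<open>p \<in> proj C (p + R *\<^sub>R sgn w)\<close> \<open>c \<in> C\<close> \<open>w \<noteq> 0\<close> \<open>R > 0\<close> by (auto simp: proj_def norm_sgn)
    also have "p + R *\<^sub>R sgn w - c = (x + R *\<^sub>R \<zeta> - c) + (p - x) + R *\<^sub>R (sgn w - \<zeta>)"
      by (simp add: algebra_simps)
    also have "norm \<dots> \<le> norm (x + R *\<^sub>R \<zeta> - c) + norm (p - x) + R * norm (sgn w - \<zeta>)"
      using norm_triangle_ineq[of "(x + R *\<^sub>R \<zeta> - c) + (p - x)" "R *\<^sub>R (sgn w - \<zeta>)"]
        norm_triangle_ineq[of "x + R *\<^sub>R \<zeta> - c" "p - x"] \<open>R > 0\<close> by simp
    also have "\<dots> \<le> norm (x + R *\<^sub>R \<zeta> - c) + R * e + R * (4 * e)"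
      using \<open>norm (p - x) \<le> 2 * t * e\<close> mult_right_mono[of "2 * t" R e] \<open>t \<le> R / 2\<close> \<open>0 < e\<close>
        mult_left_mono[OF \<open>norm (sgn w - \<zeta>) \<le> 4 * e\<close>, of R] \<open>R > 0\<close> by linarith
    finally show "R \<le> norm (x + R *\<^sub>R \<zeta> - c) + 5 * R * e" by simp
  qed (use \<open>R > 0\<close> in auto)
  then show ?thesis using \<open>x \<in> C\<close> \<open>norm \<zeta> = 1\<close> \<open>R > 0\<close> by (auto simp: proj_def)
qed

lemma prox_regular_unique_proj_cball:
  fixes C :: "'a::euclidean_space set"
  assumes "prox_regular C" "x \<in> C"
  obtains R where "R > 0" "\<And>y. y \<in> cball x (2 * R) \<Longrightarrow> \<exists>!q. q \<in> proj C y"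
proof -
  obtain U where "open U" "C \<subseteq> U" and unique: "\<And>y. y \<in> U \<Longrightarrow> \<exists>!q. q \<in> proj C y"
    using \<open>prox_regular C\<close> by (auto simp: prox_regular_def)
  obtain \<rho> where "\<rho> > 0" "cball x \<rho> \<subseteq> U"
    using \<open>open U\<close> \<open>x \<in> C\<close> \<open>C \<subseteq> U\<close> by (meson open_contains_cball subsetD)
  show ?thesis
  proof (rule that[of "\<rho> / 2"])
    show "\<exists>!q. q \<in> proj C y" if "y \<in> cball x (2 * (\<rho> / 2))" for y
      using that \<open>cball x \<rho> \<subseteq> U\<close> by (intro unique) auto
  qed (use \<open>\<rho> > 0\<close> in simp)
qed

lemma frechet_normal_imp_proj_fixed:
  fixes C :: "'a::euclidean_space set"
  assumes "closed C" and unique: "\<And>y. y \<in> cball x (2 * R) \<Longrightarrow> \<exists>!q. q \<in> proj C y"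
    and "x \<in> C" "R > 0" "n \<in> frechet_normal_cone C x"
  shows "\<exists>\<gamma>>0. x \<in> proj C (x + \<gamma> *\<^sub>R n)"
proof (cases "n = 0")
  case True
  then show ?thesis using \<open>x \<in> C\<close> by (auto simp: proj_def intro: exI[of _ 1])
next
  case False
  have "inverse (norm n) *\<^sub>R n \<in> frechet_normal_cone C x"
    by (intro convex_cone_scaleR[OF convex_cone_frechet_normal_cone _ \<open>n \<in> frechet_normal_cone C x\<close>]) simp
  then have "x \<in> proj C (x + R *\<^sub>R sgn n)"
    using False by (intro frechet_normal_imp_proximal[OF \<open>closed C\<close> unique \<open>x \<in> C\<close> \<open>R > 0\<close>])
      (simp_all add: norm_sgn sgn_div_norm)
  then show ?thesis
    using \<open>R > 0\<close> False by (intro exI[of _ "R / norm n"]) (simp add: sgn_div_norm divide_inverse)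
qed

lemma proj_offset_direction_bounds:
  fixes C :: "'a::euclidean_space set"
  assumes "closed C" and unique: "\<And>y. y \<in> cball x (2 * R) \<Longrightarrow> \<exists>!q. q \<in> proj C y"
    and "x \<in> C" "R > 0" "t > 0" "2 * t * norm d \<le> R"
    and P: "P \<in> proj C (x + t *\<^sub>R d)" and "P \<noteq> x + t *\<^sub>R d"
  defines "\<nu> \<equiv> sgn (x + t *\<^sub>R d - P)"
  shows "norm (P - x) \<le> 2 * t * norm d"
    and "\<And>c. c \<in> C \<Longrightarrow> 2 * inner (R *\<^sub>R \<nu>) (c - P) \<le> (norm (c - P))\<^sup>2"
    and "norm (x + t *\<^sub>R d - P) \<le> t * inner \<nu> d + 2 * t\<^sup>2 * (norm d)\<^sup>2 / R"
proof -
  define w where "w = x + t *\<^sub>R d - P"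
  have "\<nu> = sgn w" by (simp add: \<nu>_def w_def)
  have "w \<noteq> 0" "norm \<nu> = 1" using \<open>P \<noteq> x + t *\<^sub>R d\<close> by (auto simp: w_def \<nu>_def norm_sgn)
  have "norm w \<le> t * norm d" using P \<open>x \<in> C\<close> \<open>t > 0\<close> by (auto simp: proj_def w_def)
  moreover have "norm (P - x) \<le> norm (t *\<^sub>R d) + norm w"
    using norm_triangle_ineq4[of "t *\<^sub>R d" w] by (simp add: w_def)
  ultimately show Px: "norm (P - x) \<le> 2 * t * norm d" using \<open>t > 0\<close> by simp
  then have "P \<in> proj C (P + R *\<^sub>R \<nu>)"
    using proj_extend_to_radius[where x=x and R=R, OF \<open>closed C\<close> unique \<open>R > 0\<close> P] \<open>P \<noteq> x + t *\<^sub>R d\<close>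
      \<open>2 * t * norm d \<le> R\<close> by (simp add: \<nu>_def)
  then show prox: "\<And>c. c \<in> C \<Longrightarrow> 2 * inner (R *\<^sub>R \<nu>) (c - P) \<le> (norm (c - P))\<^sup>2"
    by (rule proximal_normal_ineq)
  have "inner \<nu> w = norm w" using \<open>w \<noteq> 0\<close>
    by (simp add: \<open>\<nu> = sgn w\<close> sgn_div_norm power2_norm_eq_inner[symmetric] power2_eq_square)
  moreover have "x - P = w - t *\<^sub>R d" by (simp add: w_def)
  ultimately have "inner \<nu> (x - P) = norm w - t * inner \<nu> d" by (simp add: inner_diff_right)
  then have "2 * R * (norm w - t * inner \<nu> d) \<le> (norm (x - P))\<^sup>2"
    using prox[OF \<open>x \<in> C\<close>] by (simp add: mult.assoc)
  also have "\<dots> \<le> (2 * t * norm d)\<^sup>2" using Px by (simp add: norm_minus_commute power_mono)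
  finally have "R * (norm w - t * inner \<nu> d) \<le> 2 * t\<^sup>2 * (norm d)\<^sup>2"
    by (simp add: power_mult_distrib)
  then show "norm (x + t *\<^sub>R d - P) \<le> t * inner \<nu> d + 2 * t\<^sup>2 * (norm d)\<^sup>2 / R"
    using \<open>R > 0\<close> by (simp add: field_simps flip: w_def)
qed

lemma polar_of_frechet_normal_cone_imp_tangent:
  fixes C :: "'a::euclidean_space set"
  assumes "closed C" and unique: "\<And>y. y \<in> cball x (2 * R) \<Longrightarrow> \<exists>!q. q \<in> proj C y"
    and "x \<in> C" "R > 0" and polar: "\<And>n. n \<in> frechet_normal_cone C x \<Longrightarrow> inner n d \<le> 0"
    and "e > 0" "t0 > 0"
  shows "\<exists>t c. 0 < t \<and> t \<le> t0 \<and> c \<in> C \<and> norm (c - (x + t *\<^sub>R d)) \<le> e * t"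
proof (rule ccontr)
  \<comment> \<open>Otherwise the normalised residuals of projecting x + t d are proximal normals \<nu> with
    \<langle>\<nu>, d\<rangle> \<ge> e - O(t); a limit point as t \<rightarrow> 0 is a Frechet normal l with \<langle>l, d\<rangle> \<ge> e.\<close>
  assume "\<not> ?thesis"
  then have far: "\<And>t c. 0 < t \<Longrightarrow> t \<le> t0 \<Longrightarrow> c \<in> C \<Longrightarrow> e * t < norm (c - (x + t *\<^sub>R d))"
    by (meson not_le)
  have "d \<noteq> 0" using far[OF \<open>t0 > 0\<close> order_refl \<open>x \<in> C\<close>] \<open>e > 0\<close> \<open>t0 > 0\<close> by auto
  define \<tau> where "\<tau> = min t0 (R / (2 * norm d))"
  define t where "t k = \<tau> / real (Suc k)" for k
  have "\<tau> > 0" "\<tau> \<le> t0" "2 * \<tau> * norm d \<le> R"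
    using \<open>t0 > 0\<close> \<open>R > 0\<close> \<open>d \<noteq> 0\<close> by (auto simp: \<tau>_def field_simps min_def)
  have t: "0 < t k" "t k \<le> \<tau>" for k using \<open>\<tau> > 0\<close> by (auto simp: t_def divide_le_eq)
  have "t \<longlonglongrightarrow> 0"
    unfolding t_def using tendsto_mult[OF tendsto_const[of \<tau>] LIMSEQ_inverse_real_of_nat]
    by (simp add: divide_inverse)
  have "\<forall>k. \<exists>p. p \<in> proj C (x + t k *\<^sub>R d)"
    using proj_nonempty[OF \<open>closed C\<close>] \<open>x \<in> C\<close> by blast
  then obtain P where P: "\<And>k. P k \<in> proj C (x + t k *\<^sub>R d)" by metis
  define \<nu> where "\<nu> k = sgn (x + t k *\<^sub>R d - P k)" for k
  have "P k \<in> C" for k using P by (simp add: proj_def)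
  have gap: "e * t k < norm (x + t k *\<^sub>R d - P k)" for k
    using far[OF t(1) _ \<open>P k \<in> C\<close>] t(2)[of k] \<open>\<tau> \<le> t0\<close> by (simp add: norm_minus_commute)
  have P_ne: "P k \<noteq> x + t k *\<^sub>R d" for k
    using gap[of k] mult_pos_pos[OF \<open>e > 0\<close> t(1)[of k]] by force
  have "2 * t k * norm d \<le> R" for k
    using mult_right_mono[OF t(2)[of k] norm_ge_zero[of d]] \<open>2 * \<tau> * norm d \<le> R\<close> by simp
  note bounds = proj_offset_direction_bounds[OF \<open>closed C\<close> unique \<open>x \<in> C\<close> \<open>R > 0\<close> t(1) this P P_ne]
  have "norm (\<nu> k) = 1" for k using P_ne[of k] by (auto simp: \<nu>_def norm_sgn)
  then have "\<nu> k \<in> sphere 0 1" for k by simp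
  then obtain l r where "strict_mono r" and \<nu>_lim: "(\<nu> \<circ> r) \<longlonglongrightarrow> l"
    using compact_imp_seq_compact[OF compact_sphere, of 0 1] seq_compactE by blast
  have "(t \<circ> r) \<longlonglongrightarrow> 0" using LIMSEQ_subseq_LIMSEQ[OF \<open>t \<longlonglongrightarrow> 0\<close> \<open>strict_mono r\<close>] .
  then have t_lim: "(\<lambda>k. 2 * t (r k) * c) \<longlonglongrightarrow> 0" for c :: real
    using tendsto_mult_right[OF tendsto_mult_left, of "t \<circ> r" 0 _ 2 c] by (simp add: comp_def)
  have "(\<lambda>k. P (r k) - x) \<longlonglongrightarrow> 0"
    using bounds(1) by (intro Lim_null_comparison[OF always_eventually t_lim[of "norm d"]]) simp
  then have P_lim: "(P \<circ> r) \<longlonglongrightarrow> x" by (simp add: LIM_zero_iff comp_def)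
  have "e \<le> inner l d"
  proof (rule LIMSEQ_le[OF _ tendsto_inner[OF \<nu>_lim tendsto_const]])
    show "(\<lambda>k. e - 2 * t (r k) * (norm d)\<^sup>2 / R) \<longlonglongrightarrow> e"
      using tendsto_diff[OF tendsto_const tendsto_divide[OF t_lim tendsto_const]] \<open>R > 0\<close> by simp
    have "e - 2 * t k * (norm d)\<^sup>2 / R \<le> inner (\<nu> k) d" for k
    proof -
      have "t k * e < t k * (inner (\<nu> k) d + 2 * t k * (norm d)\<^sup>2 / R)"
        using gap[of k] bounds(3)[of k] by (simp add: \<nu>_def power2_eq_square algebra_simps)
      then show ?thesis using t(1)[of k] by simp
    qed
    then show "\<exists>N. \<forall>k\<ge>N. e - 2 * t (r k) * (norm d)\<^sup>2 / R \<le> inner ((\<nu> \<circ> r) k) d" by auto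
  qed
  moreover have "l \<in> frechet_normal_cone C x"
    using bounds(2)
    by (intro proximal_limit_in_frechet_normal_cone[OF \<nu>_lim P_lim \<open>R > 0\<close>]) (auto simp: \<nu>_def)
  ultimately show False using polar \<open>e > 0\<close> by fastforce
qed

section \<open>Frechet subgradients and the stationarity measure\<close>

lemma ereal_le_divide_diff_iff:
  assumes "n > 0" "J \<noteq> -\<infinity>"
  shows "ereal a \<le> (J - ereal r - ereal c) / ereal n \<longleftrightarrow> ereal (r + c + a * n) \<le> J"
proof (cases J)
  case (real y)
  then show ?thesis using \<open>n > 0\<close> by (simp add: pos_le_divide_eq algebra_simps)
qed (use assms in auto)

lemma ereal_SUP_INF_nonneg_iff:
  fixes q :: "'a \<Rightarrow> ereal" and B :: "real \<Rightarrow> 'a set"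
  shows "0 \<le> (SUP \<epsilon>\<in>{0<..}. INF y\<in>B \<epsilon>. q y) \<longleftrightarrow> (\<forall>e>0. \<exists>\<delta>>0. \<forall>y\<in>B \<delta>. ereal (- e) \<le> q y)"
proof
  assume nonneg: "0 \<le> (SUP \<epsilon>\<in>{0<..}. INF y\<in>B \<epsilon>. q y)"
  show "\<forall>e>0. \<exists>\<delta>>0. \<forall>y\<in>B \<delta>. ereal (- e) \<le> q y"
  proof (intro allI impI)
    fix e :: real assume "e > 0"
    then have "ereal (- e) < (SUP \<epsilon>\<in>{0<..}. INF y\<in>B \<epsilon>. q y)"
      using order_less_le_trans[OF _ nonneg, of "ereal (- e)"] by simp
    then obtain \<delta> where "\<delta> > 0" "ereal (- e) < (INF y\<in>B \<delta>. q y)" by (auto simp: less_SUP_iff)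
    then show "\<exists>\<delta>>0. \<forall>y\<in>B \<delta>. ereal (- e) \<le> q y" by (auto dest: less_INF_D intro: less_imp_le)
  qed
next
  assume H: "\<forall>e>0. \<exists>\<delta>>0. \<forall>y\<in>B \<delta>. ereal (- e) \<le> q y"
  have lower: "ereal (- e) \<le> (SUP \<epsilon>\<in>{0<..}. INF y\<in>B \<epsilon>. q y)" if "e > 0" for e
  proof -
    obtain \<delta> where "\<delta> > 0" "\<forall>y\<in>B \<delta>. ereal (- e) \<le> q y" using H \<open>e > 0\<close> by blast
    then show ?thesis by (intro SUP_upper2[of \<delta>] INF_greatest) auto
  qed
  show "0 \<le> (SUP \<epsilon>\<in>{0<..}. INF y\<in>B \<epsilon>. q y)"
  proof (cases "SUP \<epsilon>\<in>{0<..}. INF y\<in>B \<epsilon>. q y")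
    case (real z)
    then have "- e \<le> z" if "e > 0" for e using lower[OF that] by simp
    from this[of "- z / 2"] have "0 \<le> z" by (cases "0 \<le> z") auto
    then show ?thesis using real by simp
  qed (use lower[of 1] in auto)
qed

lemma frechet_subdiff_iff:
  fixes J :: "'a::euclidean_space \<Rightarrow> ereal"
  assumes Jx: "J x = ereal r" and not_minf: "\<And>y. J y \<noteq> -\<infinity>"
  shows "v \<in> frechet_subdiff J x \<longleftrightarrow>
    (\<forall>e>0. \<exists>\<delta>>0. \<forall>y. 0 < norm (y - x) \<and> norm (y - x) < \<delta> \<longrightarrow>
        ereal (r + inner v (y - x) - e * norm (y - x)) \<le> J y)"
proof -
  define q where "q y = (J y - J x - ereal (inner v (y - x))) / ereal (norm (y - x))" for y
  define B where "B \<epsilon> = {y. 0 < norm (y - x) \<and> norm (y - x) < \<epsilon>}" for \<epsilon> :: real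
  have "ereal (- e) \<le> q y \<longleftrightarrow> ereal (r + inner v (y - x) - e * norm (y - x)) \<le> J y"
    if "0 < norm (y - x)" for y e
    using ereal_le_divide_diff_iff[OF that not_minf[of y], of "- e" r "inner v (y - x)"]
    by (simp add: q_def Jx)
  then have q_iff: "(\<forall>y\<in>B \<delta>. ereal (- e) \<le> q y) \<longleftrightarrow>
      (\<forall>y. 0 < norm (y - x) \<and> norm (y - x) < \<delta> \<longrightarrow> ereal (r + inner v (y - x) - e * norm (y - x)) \<le> J y)"
    for \<delta> e by (auto simp: B_def)
  have "v \<in> frechet_subdiff J x \<longleftrightarrow> 0 \<le> (SUP \<epsilon>\<in>{0<..}. INF y\<in>B \<epsilon>. q y)"
    using Jx by (simp add: frechet_subdiff_def q_def B_def)
  also have "\<dots> \<longleftrightarrow> (\<forall>e>0. \<exists>\<delta>>0. \<forall>y\<in>B \<delta>. ereal (- e) \<le> q y)"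
    by (rule ereal_SUP_INF_nonneg_iff)
  also have "\<dots> \<longleftrightarrow> (\<forall>e>0. \<exists>\<delta>>0. \<forall>y. 0 < norm (y - x) \<and> norm (y - x) < \<delta> \<longrightarrow>
        ereal (r + inner v (y - x) - e * norm (y - x)) \<le> J y)"
    by (simp only: q_iff)
  finally show ?thesis .
qed

lemma frechet_subdiff_real_iff:
  fixes F :: "'a::euclidean_space \<Rightarrow> real"
  shows "v \<in> frechet_subdiff (\<lambda>x. ereal (F x)) x \<longleftrightarrow>
    (\<forall>e>0. \<exists>\<delta>>0. \<forall>y. norm (y - x) < \<delta> \<longrightarrow> F x + inner v (y - x) - e * norm (y - x) \<le> F y)"
proof -
  have "v \<in> frechet_subdiff (\<lambda>x. ereal (F x)) x \<longleftrightarrow>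
    (\<forall>e>0. \<exists>\<delta>>0. \<forall>y. 0 < norm (y - x) \<and> norm (y - x) < \<delta> \<longrightarrow>
        F x + inner v (y - x) - e * norm (y - x) \<le> F y)"
    by (subst frechet_subdiff_iff) auto
  also have "\<dots> \<longleftrightarrow> (\<forall>e>0. \<exists>\<delta>>0. \<forall>y. norm (y - x) < \<delta> \<longrightarrow> F x + inner v (y - x) - e * norm (y - x) \<le> F y)"
  proof -
    have "(0 < norm (y - x) \<and> norm (y - x) < \<delta> \<longrightarrow> F x + inner v (y - x) - e * norm (y - x) \<le> F y) \<longleftrightarrow>
      (norm (y - x) < \<delta> \<longrightarrow> F x + inner v (y - x) - e * norm (y - x) \<le> F y)" for y \<delta> e
      by (cases "y = x") auto
    then show ?thesis by simp
  qed
  finally show ?thesis .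
qed

lemma zero_in_frechet_subdiff_plus_ind_iff:
  fixes F :: "'a::euclidean_space \<Rightarrow> real"
  shows "0 \<in> frechet_subdiff (\<lambda>x. ereal (F x) + ind C x) x \<longleftrightarrow>
    x \<in> C \<and> (\<forall>e>0. \<exists>\<delta>>0. \<forall>y\<in>C. norm (y - x) < \<delta> \<longrightarrow> F x - e * norm (y - x) \<le> F y)"
proof (cases "x \<in> C")
  case True
  then have "0 \<in> frechet_subdiff (\<lambda>x. ereal (F x) + ind C x) x \<longleftrightarrow>
    (\<forall>e>0. \<exists>\<delta>>0. \<forall>y. 0 < norm (y - x) \<and> norm (y - x) < \<delta> \<longrightarrow>
        ereal (F x - e * norm (y - x)) \<le> ereal (F y) + ind C y)"
    by (subst frechet_subdiff_iff[where r="F x"]) (auto simp: ind_def)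
  also have "\<dots> \<longleftrightarrow> (\<forall>e>0. \<exists>\<delta>>0. \<forall>y\<in>C. norm (y - x) < \<delta> \<longrightarrow> F x - e * norm (y - x) \<le> F y)"
  proof -
    have "(0 < norm (y - x) \<and> norm (y - x) < \<delta> \<longrightarrow> ereal (F x - e * norm (y - x)) \<le> ereal (F y) + ind C y)
      \<longleftrightarrow> (y \<in> C \<longrightarrow> norm (y - x) < \<delta> \<longrightarrow> F x - e * norm (y - x) \<le> F y)" for y \<delta> e
      by (cases "y = x") (auto simp: ind_def)
    then show ?thesis by (simp add: Ball_def)
  qed
  finally show ?thesis using True by simp
qed (simp add: frechet_subdiff_def ind_def)

lemma frechet_subdiff_norm_le_lipschitz:
  fixes F :: "'a::euclidean_space \<Rightarrow> real"
  assumes "lipschitz_on L UNIV F" "v \<in> frechet_subdiff (\<lambda>x. ereal (F x)) x"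
  shows "norm v \<le> L"
proof (cases "v = 0")
  case False
  show ?thesis
  proof (rule field_le_epsilon)
    fix e :: real assume "e > 0"
    then obtain \<delta> where "\<delta> > 0"
      and \<delta>: "\<And>y. norm (y - x) < \<delta> \<Longrightarrow> F x + inner v (y - x) - e * norm (y - x) \<le> F y"
      using assms(2) by (auto simp: frechet_subdiff_real_iff)
    define y where "y = x + (\<delta> / 2 / norm v) *\<^sub>R v"
    have ny: "norm (y - x) = \<delta> / 2" and iv: "inner v (y - x) = \<delta> / 2 * norm v"
      using False \<open>\<delta> > 0\<close> by (simp_all add: y_def power2_norm_eq_inner[symmetric] power2_eq_square)
    have "F x + inner v (y - x) - e * norm (y - x) \<le> F y" using \<delta> ny \<open>\<delta> > 0\<close> by simp
    then have lower: "F x + \<delta> / 2 * norm v - e * (\<delta> / 2) \<le> F y" unfolding ny iv .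
    have "\<bar>F y - F x\<bar> \<le> L * (\<delta> / 2)" using lipschitz_on_normD[OF assms(1), of y x] ny by simp
    then have "F y - F x \<le> L * (\<delta> / 2)" by (rule abs_le_D1)
    with lower have "\<delta> / 2 * norm v \<le> \<delta> / 2 * (L + e)" by (simp add: algebra_simps)
    then show "norm v \<le> L + e" using \<open>\<delta> > 0\<close> by simp
  qed
qed (use assms in \<open>auto simp: lipschitz_on_nonneg\<close>)

lemma closed_frechet_subdiff:
  fixes F :: "'a::euclidean_space \<Rightarrow> real"
  shows "closed (frechet_subdiff (\<lambda>x. ereal (F x)) x)"
proof -
  have "v \<in> frechet_subdiff (\<lambda>x. ereal (F x)) x"
    if v: "v \<in> closure (frechet_subdiff (\<lambda>x. ereal (F x)) x)" for v
    unfolding frechet_subdiff_real_iff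
  proof (intro allI impI)
    fix e :: real assume "e > 0"
    obtain u where u: "u \<in> frechet_subdiff (\<lambda>x. ereal (F x)) x" "dist u v < e / 2"
      using v \<open>e > 0\<close> by (metis closure_approachable half_gt_zero)
    obtain \<delta> where "\<delta> > 0"
      and \<delta>: "\<And>y. norm (y - x) < \<delta> \<Longrightarrow> F x + inner u (y - x) - e / 2 * norm (y - x) \<le> F y"
      using u(1) \<open>e > 0\<close> unfolding frechet_subdiff_real_iff by (meson half_gt_zero)
    have "F x + inner v (y - x) - e * norm (y - x) \<le> F y" if "norm (y - x) < \<delta>" for y
    proof -
      have "inner (v - u) (y - x) \<le> norm (v - u) * norm (y - x)" by (rule norm_cauchy_schwarz)
      also have "\<dots> \<le> e / 2 * norm (y - x)"
        using u(2) by (intro mult_right_mono) (auto simp: dist_norm norm_minus_commute)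
      finally show ?thesis using \<delta>[OF that] by (simp add: inner_diff_left)
    qed
    then show "\<exists>\<delta>>0. \<forall>y. norm (y - x) < \<delta> \<longrightarrow> F x + inner v (y - x) - e * norm (y - x) \<le> F y"
      using \<open>\<delta> > 0\<close> by auto
  qed
  then show ?thesis using closure_subset_eq by blast
qed

lemma proj_fixed_imp_frechet_stationary:
  fixes F :: "'a::euclidean_space \<Rightarrow> real"
  assumes v: "v \<in> frechet_subdiff (\<lambda>x. ereal (F x)) x" and x: "x \<in> proj C (x - \<gamma> *\<^sub>R v)" and "\<gamma> > 0"
  shows "0 \<in> frechet_subdiff (\<lambda>x. ereal (F x) + ind C x) x"
  unfolding zero_in_frechet_subdiff_plus_ind_iff
proof (intro conjI allI impI)
  show "x \<in> C" using x by (simp add: proj_def)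
  fix e :: real assume "e > 0"
  obtain \<delta> where "\<delta> > 0"
    and \<delta>: "\<And>y. norm (y - x) < \<delta> \<Longrightarrow> F x + inner v (y - x) - e / 2 * norm (y - x) \<le> F y"
    using v \<open>e > 0\<close> unfolding frechet_subdiff_real_iff by (meson half_gt_zero)
  have "F x - e * norm (y - x) \<le> F y" if "y \<in> C" "norm (y - x) < min \<delta> (\<gamma> * e)" for y
  proof -
    have "2 * \<gamma> * - inner v (y - x) \<le> (norm (y - x))\<^sup>2"
      using proximal_normal_ineq[of x C "- \<gamma> *\<^sub>R v" y] x \<open>y \<in> C\<close> by (simp add: algebra_simps)
    also have "\<dots> \<le> (\<gamma> * e) * norm (y - x)"
      using that unfolding power2_eq_square by (intro mult_right_mono) auto
    finally have "\<gamma> * (- 2 * inner v (y - x)) \<le> \<gamma> * (e * norm (y - x))" by (simp add: algebra_simps)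
    then have "- 2 * inner v (y - x) \<le> e * norm (y - x)"
      using mult_le_cancel_left_pos[OF \<open>\<gamma> > 0\<close>] by blast
    then have "- inner v (y - x) \<le> e / 2 * norm (y - x)" by simp
    then show ?thesis using \<delta>[of y] that by simp
  qed
  then show "\<exists>\<delta>>0. \<forall>y\<in>C. norm (y - x) < \<delta> \<longrightarrow> F x - e * norm (y - x) \<le> F y"
    using \<open>\<delta> > 0\<close> \<open>\<gamma> > 0\<close> \<open>e > 0\<close> by (intro exI[of _ "min \<delta> (\<gamma> * e)"]) auto
qed

lemma stat_measure_nonneg: "0 \<le> stat_measure F C \<gamma> x"
  unfolding stat_measure_def by (intro INF_greatest) auto

lemma stat_measure_less_imp_near_proj:
  assumes "\<gamma> > 0" "stat_measure F C \<gamma> x < ereal \<epsilon>"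
  shows "\<exists>v p. v \<in> frechet_subdiff (\<lambda>x. ereal (F x)) x \<and> p \<in> proj C (x - \<gamma> *\<^sub>R v) \<and> norm (x - p) < \<gamma> * \<epsilon>"
proof -
  obtain p v where "v \<in> frechet_subdiff (\<lambda>x. ereal (F x)) x" "p \<in> proj C (x - \<gamma> *\<^sub>R v)"
    and "norm ((1 / \<gamma>) *\<^sub>R (x - p)) < \<epsilon>"
    using assms(2) unfolding stat_measure_def INF_less_iff by auto
  moreover have "norm (x - p) < \<gamma> * \<epsilon>"
  proof -
    have "\<gamma> * (norm (x - p) / \<gamma>) < \<gamma> * \<epsilon>"
      using calculation(3) \<open>\<gamma> > 0\<close> by (intro mult_strict_left_mono) simp_all
    then show ?thesis using \<open>\<gamma> > 0\<close> by simp
  qed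
  ultimately show ?thesis by blast
qed

lemma stat_measure_eq_0_iff:
  fixes F :: "'a::euclidean_space \<Rightarrow> real"
  assumes "lipschitz_on L UNIV F" "closed C" "\<gamma> > 0"
  shows "stat_measure F C \<gamma> x = 0 \<longleftrightarrow>
    (\<exists>v \<in> frechet_subdiff (\<lambda>x. ereal (F x)) x. x \<in> proj C (x - \<gamma> *\<^sub>R v))"
    (is "_ \<longleftrightarrow> (\<exists>v\<in>?D. _)")
proof
  assume "stat_measure F C \<gamma> x = 0"
  then have "\<exists>v p. v \<in> ?D \<and> p \<in> proj C (x - \<gamma> *\<^sub>R v) \<and> norm (x - p) < \<gamma> * (1 / real (Suc k))" for k
    using stat_measure_less_imp_near_proj[OF \<open>\<gamma> > 0\<close>, of F C x "1 / real (Suc k)"] by simp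
  then obtain V P where V: "\<And>k. V k \<in> ?D" and P: "\<And>k. P k \<in> proj C (x - \<gamma> *\<^sub>R V k)"
    and P_near: "\<And>k. norm (x - P k) < \<gamma> * (1 / real (Suc k))" by metis
  have "\<forall>k. V k \<in> cball 0 L" using frechet_subdiff_norm_le_lipschitz[OF assms(1) V] by simp
  moreover have "seq_compact (cball (0::'a) L)" by (rule compact_imp_seq_compact) simp
  ultimately obtain v r where "v \<in> cball 0 L" "strict_mono r" and V_lim: "(V \<circ> r) \<longlonglongrightarrow> v"
    using seq_compactE by metis
  have "v \<in> ?D"
    using closed_sequentially[OF closed_frechet_subdiff _ V_lim] V by simp
  have \<gamma>_lim: "(\<lambda>k. \<gamma> * (1 / real (Suc k))) \<longlonglongrightarrow> 0"
    using tendsto_mult[OF tendsto_const[of \<gamma>] LIMSEQ_inverse_real_of_nat] by (simp add: divide_inverse)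
  have "(\<lambda>k. P k - x) \<longlonglongrightarrow> 0"
    using P_near by (intro Lim_null_comparison[OF always_eventually \<gamma>_lim])
      (auto simp: norm_minus_commute less_imp_le)
  then have "P \<longlonglongrightarrow> x" by (simp add: LIM_zero_iff)
  then have P_lim: "(P \<circ> r) \<longlonglongrightarrow> x" using \<open>strict_mono r\<close> by (rule LIMSEQ_subseq_LIMSEQ)
  have "(\<lambda>k. x - \<gamma> *\<^sub>R (V \<circ> r) k) \<longlonglongrightarrow> x - \<gamma> *\<^sub>R v" by (intro tendsto_intros V_lim)
  then have "x \<in> proj C (x - \<gamma> *\<^sub>R v)"
    using P by (intro proj_limit[OF \<open>closed C\<close> _ P_lim]) (simp_all add: comp_def)
  then show "\<exists>v\<in>?D. x \<in> proj C (x - \<gamma> *\<^sub>R v)" using \<open>v \<in> ?D\<close> by blast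
next
  assume "\<exists>v\<in>?D. x \<in> proj C (x - \<gamma> *\<^sub>R v)"
  then have "0 \<in> {(1 / \<gamma>) *\<^sub>R (x - p) | p v. v \<in> ?D \<and> p \<in> proj C (x - \<gamma> *\<^sub>R v)}" by force
  then have "stat_measure F C \<gamma> x \<le> ereal (norm (0::'a))"
    unfolding stat_measure_def by (rule INF_lower)
  with stat_measure_nonneg[of F C \<gamma> x] show "stat_measure F C \<gamma> x = 0" by (simp add: zero_ereal_def)
qed

section \<open>Convex models\<close>

lemma convex_on_min_separation:
  fixes h :: "'a::euclidean_space \<Rightarrow> real"
  assumes "convex_on UNIV h" "convex T" "0 \<in> T" and min: "\<And>d. d \<in> T \<Longrightarrow> h x \<le> h (x + d)"
  obtains a1 \<beta> b where "(a1, \<beta>) \<noteq> 0"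
    "\<And>y \<alpha>. h y \<le> \<alpha> \<Longrightarrow> inner a1 y + \<beta> * \<alpha> \<le> b"
    "\<And>d \<gamma>. d \<in> T \<Longrightarrow> \<gamma> < h x \<Longrightarrow> b \<le> inner a1 (x + d) + \<beta> * \<gamma>"
proof -
  define B where "B = {(x + d, \<gamma>) | d \<gamma>. d \<in> T \<and> \<gamma> < h x}"
  have "convex B" unfolding B_def
  proof (rule convexI, clarify)
    fix d1 d2 \<gamma>1 \<gamma>2 and u v :: real
    assume "d1 \<in> T" "d2 \<in> T" "\<gamma>1 < h x" "\<gamma>2 < h x" "0 \<le> u" "0 \<le> v" "u + v = 1"
    then have "u *\<^sub>R d1 + v *\<^sub>R d2 \<in> T" "u * \<gamma>1 + v * \<gamma>2 < h x"
      using convexD[OF \<open>convex T\<close>] convex_bound_lt[of \<gamma>1 "h x" \<gamma>2 u v] by auto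
    moreover have "u *\<^sub>R (x + d1, \<gamma>1) + v *\<^sub>R (x + d2, \<gamma>2) = (x + (u *\<^sub>R d1 + v *\<^sub>R d2), u * \<gamma>1 + v * \<gamma>2)"
      using \<open>u + v = 1\<close> by (simp add: algebra_simps flip: scaleR_add_left)
    ultimately show "\<exists>d \<gamma>. u *\<^sub>R (x + d1, \<gamma>1) + v *\<^sub>R (x + d2, \<gamma>2) = (x + d, \<gamma>) \<and> d \<in> T \<and> \<gamma> < h x"
      by blast
  qed
  have "(x, h x) \<in> epigraph UNIV h" "(x + 0, h x - 1) \<in> B" using \<open>0 \<in> T\<close> by (auto simp: epigraph_def B_def)
  moreover have "epigraph UNIV h \<inter> B = {}" using min by (fastforce simp: epigraph_def B_def)
  ultimately obtain a b where "a \<noteq> 0" and epi: "\<And>z. z \<in> epigraph UNIV h \<Longrightarrow> inner a z \<le> b"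
    and sep: "\<And>z. z \<in> B \<Longrightarrow> b \<le> inner a z"
    using separating_hyperplane_sets[OF convex_epigraphI[OF \<open>convex_on UNIV h\<close>] \<open>convex B\<close>] by blast
  obtain a1 \<beta> where a: "a = (a1, \<beta>)" by fastforce
  show ?thesis
  proof (rule that[of a1 \<beta> b])
    show "(a1, \<beta>) \<noteq> 0" using \<open>a \<noteq> 0\<close> by (simp add: a)
    show "inner a1 y + \<beta> * \<alpha> \<le> b" if "h y \<le> \<alpha>" for y \<alpha>
      using epi[of "(y, \<alpha>)"] that by (simp add: a epigraph_def)
    show "b \<le> inner a1 (x + d) + \<beta> * \<gamma>" if "d \<in> T" "\<gamma> < h x" for d \<gamma>
      using sep[of "(x + d, \<gamma>)"] that by (auto simp: a B_def)
  qed
qed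

lemma convex_on_min_imp_subgradient:
  fixes h :: "'a::euclidean_space \<Rightarrow> real"
  assumes "convex_on UNIV h" "convex T" "0 \<in> T" and min: "\<And>d. d \<in> T \<Longrightarrow> h x \<le> h (x + d)"
  obtains k where "\<And>y. h x + inner k (y - x) \<le> h y" "\<And>d. d \<in> T \<Longrightarrow> 0 \<le> inner k d"
proof -
  obtain a1 \<beta> b where "(a1, \<beta>) \<noteq> 0" and epi': "\<And>y \<alpha>. h y \<le> \<alpha> \<Longrightarrow> inner a1 y + \<beta> * \<alpha> \<le> b"
    and sep': "\<And>d \<gamma>. d \<in> T \<Longrightarrow> \<gamma> < h x \<Longrightarrow> b \<le> inner a1 (x + d) + \<beta> * \<gamma>"
    using convex_on_min_separation[OF assms] by blast
  have "\<beta> \<le> 0"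
  proof (rule ccontr)
    assume "\<not> \<beta> \<le> 0"
    define \<alpha> where "\<alpha> = max (h x) ((b - inner a1 x) / \<beta> + 1)"
    have "\<beta> * ((b - inner a1 x) / \<beta> + 1) \<le> \<beta> * \<alpha>"
      using \<open>\<not> \<beta> \<le> 0\<close> by (intro mult_left_mono) (auto simp: \<alpha>_def)
    moreover have "\<beta> * ((b - inner a1 x) / \<beta> + 1) = b - inner a1 x + \<beta>"
      using \<open>\<not> \<beta> \<le> 0\<close> by (simp add: field_simps)
    ultimately show False using epi'[of x \<alpha>] \<open>\<not> \<beta> \<le> 0\<close> by (simp add: \<alpha>_def)
  qed
  moreover have "\<beta> \<noteq> 0"
  proof
    assume "\<beta> = 0"
    then have "a1 \<noteq> 0" using \<open>(a1, \<beta>) \<noteq> 0\<close> by (simp add: zero_prod_def)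
    define y where "y = x + ((b - inner a1 x + 1) / (norm a1)\<^sup>2) *\<^sub>R a1"
    have "inner a1 y = b + 1"
      using \<open>a1 \<noteq> 0\<close> by (simp add: y_def inner_add_right power2_norm_eq_inner)
    then show False using epi'[of y "h y"] \<open>\<beta> = 0\<close> by simp
  qed
  ultimately have "\<beta> < 0" by simp
  have sep_lim: "b \<le> inner a1 (x + d) + \<beta> * h x" if "d \<in> T" for d
  proof (rule field_le_epsilon)
    fix \<epsilon> :: real assume "\<epsilon> > 0"
    then show "b \<le> inner a1 (x + d) + \<beta> * h x + \<epsilon>"
      using sep'[OF \<open>d \<in> T\<close>, of "h x + \<epsilon> / \<beta>"] \<open>\<beta> < 0\<close>
      by (simp add: divide_pos_neg algebra_simps)
  qed
  define k where "k = (- 1 / \<beta>) *\<^sub>R a1"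
  show ?thesis
  proof
    fix y
    have "\<beta> * (h y - h x) \<le> inner a1 (x - y)"
      using epi'[of y "h y"] sep_lim[OF \<open>0 \<in> T\<close>] by (simp add: inner_diff_right algebra_simps)
    then show "h x + inner k (y - x) \<le> h y"
      using \<open>\<beta> < 0\<close> by (simp add: k_def inner_diff_right field_simps)
  next
    fix d assume "d \<in> T"
    then have "0 \<le> inner a1 d" using epi'[of x "h x"] sep_lim[of d] by (simp add: inner_add_right)
    then show "0 \<le> inner k d" using \<open>\<beta> < 0\<close> by (simp add: k_def divide_nonneg_neg)
  qed
qed

lemma convex_on_compose_affine_plus_linear:
  assumes "convex_on UNIV G" "linear f" "linear l"
  shows "convex_on UNIV (\<lambda>y. G (a + f y) + l y)"
proof (rule convex_onI)
  fix t :: real and y1 y2 assume "0 < t" "t < 1"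
  have "a + f ((1 - t) *\<^sub>R y1 + t *\<^sub>R y2) = (1 - t) *\<^sub>R (a + f y1) + t *\<^sub>R (a + f y2)"
    using \<open>linear f\<close> by (simp add: linear_add linear_scale)
  then have "G (a + f ((1 - t) *\<^sub>R y1 + t *\<^sub>R y2)) \<le> (1 - t) * G (a + f y1) + t * G (a + f y2)"
    using \<open>0 < t\<close> \<open>t < 1\<close> by (simp only:) (rule convex_onD[OF \<open>convex_on UNIV G\<close>]; simp)
  moreover have "l ((1 - t) *\<^sub>R y1 + t *\<^sub>R y2) = (1 - t) * l y1 + t * l y2"
    using \<open>linear l\<close> by (simp add: linear_add linear_scale)
  ultimately show "G (a + f ((1 - t) *\<^sub>R y1 + t *\<^sub>R y2)) + l ((1 - t) *\<^sub>R y1 + t *\<^sub>R y2)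
      \<le> (1 - t) * (G (a + f y1) + l y1) + t * (G (a + f y2) + l y2)"
    unfolding distrib_left by linarith
qed simp

lemma lipschitz_derivative_taylor_bound:
  fixes S :: "'a::euclidean_space \<Rightarrow> 'b::euclidean_space" and DS :: "'a \<Rightarrow> ('a \<Rightarrow>\<^sub>L 'b)"
  assumes S_deriv: "\<And>x. (S has_derivative blinfun_apply (DS x)) (at x)"
    and "lipschitz_on LD UNIV DS"
  shows "norm (S y - S x - DS x (y - x)) \<le> LD * (norm (y - x))\<^sup>2"
proof -
  define r where "r = norm (y - x)"
  define f where "f z = S z - DS x z" for z
  have "(f has_derivative blinfun_apply (DS z - DS x)) (at z within cball x r)" for z
  proof -
    have "(f has_derivative (\<lambda>h. DS z h - DS x h)) (at z)"
      unfolding f_def by (intro has_derivative_diff S_deriv bounded_linear.has_derivative[OF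
          blinfun.bounded_linear_right has_derivative_ident])
    then show ?thesis by (auto intro: has_derivative_at_withinI simp: minus_blinfun.rep_eq fun_eq_iff)
  qed
  moreover have "onorm (blinfun_apply (DS z - DS x)) \<le> LD * r" if "z \<in> cball x r" for z
  proof -
    have "onorm (blinfun_apply (DS z - DS x)) \<le> LD * norm (z - x)"
      using lipschitz_on_normD[OF \<open>lipschitz_on LD UNIV DS\<close>] by (simp add: norm_blinfun.rep_eq)
    also have "\<dots> \<le> LD * r"
      using that lipschitz_on_nonneg[OF \<open>lipschitz_on LD UNIV DS\<close>]
      by (intro mult_left_mono) (auto simp: dist_norm norm_minus_commute)
    finally show ?thesis .
  qed
  ultimately have "norm (f y - f x) \<le> LD * r * norm (y - x)"
    by (intro differentiable_bound[OF convex_cball]) (auto simp: r_def dist_norm norm_minus_commute)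
  moreover have "f y - f x = S y - S x - DS x (y - x)" by (simp add: f_def blinfun.diff_right)
  ultimately show ?thesis by (simp add: r_def power2_eq_square mult_ac)
qed

lemma lipschitz_compose_linearization_bound:
  fixes S :: "'a::euclidean_space \<Rightarrow> 'b::euclidean_space" and DS :: "'a \<Rightarrow> ('a \<Rightarrow>\<^sub>L 'b)"
    and g :: "'b \<Rightarrow> real"
  assumes "\<And>x. (S has_derivative blinfun_apply (DS x)) (at x)"
    and "lipschitz_on LD UNIV DS" "lipschitz_on Lg UNIV g"
  shows "\<bar>g (S x + DS x (y - x)) - g (S y)\<bar> \<le> Lg * (LD * (norm (y - x))\<^sup>2)"
proof -
  have "\<bar>g (S x + DS x (y - x)) - g (S y)\<bar> \<le> Lg * norm (S y - S x - DS x (y - x))"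
    using lipschitz_on_normD[OF \<open>lipschitz_on Lg UNIV g\<close>, of "S x + DS x (y - x)" "S y"]
    by (simp add: norm_minus_commute algebra_simps)
  also have "\<dots> \<le> Lg * (LD * (norm (y - x))\<^sup>2)"
    using lipschitz_derivative_taylor_bound[OF assms(1,2)] lipschitz_on_nonneg[OF \<open>lipschitz_on Lg UNIV g\<close>]
    by (rule mult_left_mono)
  finally show ?thesis .
qed

lemma weakly_convex_composite_convex_model:
  fixes S :: "'a::euclidean_space \<Rightarrow> 'b::euclidean_space" and DS :: "'a \<Rightarrow> ('a \<Rightarrow>\<^sub>L 'b)"
    and g :: "'b \<Rightarrow> real"
  assumes S_deriv: "\<And>x. (S has_derivative blinfun_apply (DS x)) (at x)"
    and "lipschitz_on LD UNIV DS" "lipschitz_on Lg UNIV g" "0 \<le> \<eta>"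
    and weak: "convex_on UNIV (\<lambda>z. g z + \<eta> / 2 * (norm z)\<^sup>2)"
  obtains h M where "convex_on UNIV h" "0 \<le> M"
    "\<And>y. \<bar>(h y - h x) - ((g \<circ> S) y - (g \<circ> S) x)\<bar> \<le> M * (norm (y - x))\<^sup>2"
proof -
  define A where "A = DS x"
  define aff where "aff y = S x + A (y - x)" for y
  define h where "h y = g (aff y) + \<eta> / 2 * (norm (aff y))\<^sup>2 - \<eta> * inner (S x) (A y)" for y
  define M where "M = Lg * LD + \<eta> / 2 * (norm A)\<^sup>2"
  have "aff y = (S x - A x) + A y" for y by (simp add: aff_def blinfun.diff_right)
  then have h_eq: "h = (\<lambda>y. (\<lambda>z. g z + \<eta> / 2 * (norm z)\<^sup>2) ((S x - A x) + A y) + (- \<eta> * inner (S x) (A y)))"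
    by (simp add: h_def fun_eq_iff)
  have "linear (\<lambda>y. - \<eta> * inner (S x) (A y))"
    by (intro linearI) (simp_all add: blinfun.add_right blinfun.scaleR_right inner_add_right algebra_simps)
  then have "convex_on UNIV h" unfolding h_eq
    by (rule convex_on_compose_affine_plus_linear[OF weak bounded_linear.linear[OF blinfun.bounded_linear_right]])
  moreover have "0 \<le> M"
    using \<open>0 \<le> \<eta>\<close> lipschitz_on_nonneg[OF \<open>lipschitz_on LD UNIV DS\<close>]
      lipschitz_on_nonneg[OF \<open>lipschitz_on Lg UNIV g\<close>]
    by (simp add: M_def)
  moreover have "\<bar>(h y - h x) - ((g \<circ> S) y - (g \<circ> S) x)\<bar> \<le> M * (norm (y - x))\<^sup>2" for y
  proof -
    have "(norm (aff y))\<^sup>2 = (norm (S x))\<^sup>2 + 2 * inner (S x) (A (y - x)) + (norm (A (y - x)))\<^sup>2"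
      unfolding aff_def by (rule power2_norm_add)
    then have "\<eta> / 2 * (norm (aff y))\<^sup>2 =
        \<eta> / 2 * (norm (S x))\<^sup>2 + \<eta> * inner (S x) (A (y - x)) + \<eta> / 2 * (norm (A (y - x)))\<^sup>2"
      by (simp add: algebra_simps)
    moreover have "\<eta> * inner (S x) (A y) - \<eta> * inner (S x) (A x) = \<eta> * inner (S x) (A (y - x))"
      by (simp add: blinfun.diff_right inner_diff_right algebra_simps)
    moreover have "aff x = S x" by (simp add: aff_def)
    ultimately have "(h y - h x) - ((g \<circ> S) y - (g \<circ> S) x) =
        (g (aff y) - g (S y)) + \<eta> / 2 * (norm (A (y - x)))\<^sup>2"
      unfolding h_def comp_def by (simp only:)
    moreover have "\<bar>g (aff y) - g (S y)\<bar> \<le> Lg * (LD * (norm (y - x))\<^sup>2)"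
      using lipschitz_compose_linearization_bound[OF assms(1-3)] by (simp add: aff_def A_def)
    moreover have "0 \<le> \<eta> / 2 * (norm (A (y - x)))\<^sup>2"
      "\<eta> / 2 * (norm (A (y - x)))\<^sup>2 \<le> \<eta> / 2 * ((norm A)\<^sup>2 * (norm (y - x))\<^sup>2)"
      using \<open>0 \<le> \<eta>\<close> norm_blinfun[of A "y - x"]
      by (auto intro!: mult_left_mono simp: power_mono power_mult_distrib[symmetric])
    ultimately show ?thesis by (simp add: M_def abs_le_iff algebra_simps)
  qed
  ultimately show ?thesis using that by blast
qed

lemma convex_model_subgradient_imp_frechet_subgradient:
  fixes F h :: "'a::euclidean_space \<Rightarrow> real"
  assumes subgrad: "\<And>y. h x + inner k (y - x) \<le> h y"
    and model: "\<And>y. \<bar>(h y - h x) - (F y - F x)\<bar> \<le> M * (norm (y - x))\<^sup>2" and "0 \<le> M"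
  shows "k \<in> frechet_subdiff (\<lambda>x. ereal (F x)) x"
  unfolding frechet_subdiff_real_iff
proof (intro allI impI)
  fix e :: real assume "e > 0"
  have "F x + inner k (y - x) - e * norm (y - x) \<le> F y" if "norm (y - x) < e / (M + 1)" for y
  proof -
    have "M * norm (y - x) \<le> (M + 1) * (e / (M + 1))"
      using that \<open>0 \<le> M\<close> by (intro mult_mono) auto
    then have "M * norm (y - x) * norm (y - x) \<le> e * norm (y - x)"
      using \<open>0 \<le> M\<close> by (intro mult_right_mono) auto
    then show ?thesis using subgrad[of y] model[of y] by (simp add: power2_eq_square abs_le_iff mult_ac)
  qed
  then show "\<exists>\<delta>>0. \<forall>y. norm (y - x) < \<delta> \<longrightarrow> F x + inner k (y - x) - e * norm (y - x) \<le> F y"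
    using \<open>e > 0\<close> \<open>0 \<le> M\<close> by (intro exI[of _ "e / (M + 1)"]) auto
qed

lemma convex_model_min_on_polar_of_normal_cone:
  fixes F h :: "'a::euclidean_space \<Rightarrow> real"
  assumes "closed C" and unique: "\<And>y. y \<in> cball x (2 * R) \<Longrightarrow> \<exists>!q. q \<in> proj C y"
    and "R > 0" and "lipschitz_on L UNIV F"
    and stationary: "0 \<in> frechet_subdiff (\<lambda>x. ereal (F x) + ind C x) x"
    and "convex_on UNIV h" "0 \<le> M" and model: "\<And>y. \<bar>(h y - h x) - (F y - F x)\<bar> \<le> M * (norm (y - x))\<^sup>2"
    and polar: "\<And>n. n \<in> frechet_normal_cone C x \<Longrightarrow> inner n d \<le> 0"
  shows "h x \<le> h (x + d)"
  \<comment> \<open>Pick c \<in> C within \<epsilon>t of x + t d: stationarity bounds F c from below, the Lipschitz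
    bound transfers this to F (x + t d), the model to h (x + t d), and convexity of h gives
    h (x + t d) - h x \<le> t (h (x + d) - h x).\<close>
proof (rule real_le_if_le_add_small[of 1 "norm d + 1 + L + M * (norm d)\<^sup>2"])
  show "0 \<le> norm d + 1 + L + M * (norm d)\<^sup>2"
    using \<open>0 \<le> M\<close> lipschitz_on_nonneg[OF \<open>lipschitz_on L UNIV F\<close>] by simp
  fix \<epsilon> :: real assume "0 < \<epsilon>" "\<epsilon> < 1"
  have "x \<in> C" using stationary by (simp add: zero_in_frechet_subdiff_plus_ind_iff)
  obtain \<delta> where "\<delta> > 0" and \<delta>: "\<And>y. y \<in> C \<Longrightarrow> norm (y - x) < \<delta> \<Longrightarrow> F x - \<epsilon> * norm (y - x) \<le> F y"
    using stationary \<open>0 < \<epsilon>\<close> unfolding zero_in_frechet_subdiff_plus_ind_iff by blast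
  define t0 where "t0 = min \<epsilon> (\<delta> / (2 * (norm d + 1)))"
  have "0 < 2 * (norm d + 1)" by (intro mult_pos_pos add_nonneg_pos) simp_all
  then have "t0 > 0" using \<open>0 < \<epsilon>\<close> \<open>\<delta> > 0\<close> by (simp add: t0_def)
  obtain t c where "0 < t" "t \<le> t0" "c \<in> C" and tangent: "norm (c - (x + t *\<^sub>R d)) \<le> \<epsilon> * t"
    using polar_of_frechet_normal_cone_imp_tangent[OF \<open>closed C\<close> unique \<open>x \<in> C\<close> \<open>R > 0\<close> polar
        \<open>0 < \<epsilon>\<close> \<open>t0 > 0\<close>] by blast
  have "t \<le> \<epsilon>" "t * (2 * (norm d + 1)) \<le> \<delta>"
    using \<open>t \<le> t0\<close> \<open>0 < 2 * (norm d + 1)\<close> by (auto simp: t0_def pos_le_divide_eq)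
  have "norm (c - x) \<le> \<epsilon> * t + t * norm d"
    using norm_triangle_ineq[of "c - (x + t *\<^sub>R d)" "t *\<^sub>R d"] tangent \<open>0 < t\<close> by simp
  also have "\<dots> \<le> t * (norm d + 1)" using \<open>\<epsilon> < 1\<close> \<open>0 < t\<close> by (simp add: algebra_simps)
  finally have "norm (c - x) \<le> t * (norm d + 1)" .
  moreover have "0 < t * (norm d + 1)" using \<open>0 < t\<close> \<open>0 < 2 * (norm d + 1)\<close> by simp
  ultimately have "norm (c - x) < \<delta>" using \<open>t * (2 * (norm d + 1)) \<le> \<delta>\<close> by linarith
  have "F x - \<epsilon> * (t * (norm d + 1)) \<le> F x - \<epsilon> * norm (c - x)"
    using \<open>norm (c - x) \<le> t * (norm d + 1)\<close> \<open>0 < \<epsilon>\<close> by simp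
  also have "\<dots> \<le> F c" using \<delta>[OF \<open>c \<in> C\<close> \<open>norm (c - x) < \<delta>\<close>] .
  finally have "F x - \<epsilon> * (t * (norm d + 1)) \<le> F c" .
  moreover have "F c - L * (\<epsilon> * t) \<le> F (x + t *\<^sub>R d)"
    using lipschitz_on_normD[OF \<open>lipschitz_on L UNIV F\<close>, of c "x + t *\<^sub>R d"] tangent
      mult_left_mono[OF tangent lipschitz_on_nonneg[OF \<open>lipschitz_on L UNIV F\<close>]] by simp
  moreover have "F (x + t *\<^sub>R d) - F x - M * (t * (t * (norm d)\<^sup>2)) \<le> h (x + t *\<^sub>R d) - h x"
    using model[of "x + t *\<^sub>R d"] \<open>0 < t\<close> by (simp add: abs_le_iff power2_eq_square mult_ac)
  moreover have "h (x + t *\<^sub>R d) \<le> (1 - t) * h x + t * h (x + d)"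
    using convex_onD[OF \<open>convex_on UNIV h\<close>, of t x "x + d"] \<open>0 < t\<close> \<open>t \<le> \<epsilon>\<close> \<open>\<epsilon> < 1\<close>
    by (simp add: algebra_simps)
  moreover have "M * (t * (t * (norm d)\<^sup>2)) \<le> t * (M * (norm d)\<^sup>2 * \<epsilon>)"
  proof -
    have "t * (t * (norm d)\<^sup>2) \<le> \<epsilon> * (t * (norm d)\<^sup>2)"
      using \<open>t \<le> \<epsilon>\<close> \<open>0 < t\<close> by (intro mult_right_mono) auto
    from mult_left_mono[OF this \<open>0 \<le> M\<close>] show ?thesis by (simp add: mult_ac)
  qed
  ultimately have "t * h x \<le> t * (h (x + d) + (norm d + 1 + L + M * (norm d)\<^sup>2) * \<epsilon>)"
    by (simp add: algebra_simps)
  then show "h x \<le> h (x + d) + (norm d + 1 + L + M * (norm d)\<^sup>2) * \<epsilon>"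
    using \<open>0 < t\<close> by simp
qed (simp)

lemma frechet_stationary_imp_proj_fixed:
  fixes F h :: "'a::euclidean_space \<Rightarrow> real"
  assumes "closed C" "prox_regular C" "lipschitz_on L UNIV F"
    and "convex_on UNIV h" "0 \<le> M" and model: "\<And>y. \<bar>(h y - h x) - (F y - F x)\<bar> \<le> M * (norm (y - x))\<^sup>2"
    and stationary: "0 \<in> frechet_subdiff (\<lambda>x. ereal (F x) + ind C x) x"
  shows "\<exists>\<gamma>>0. \<exists>v \<in> frechet_subdiff (\<lambda>x. ereal (F x)) x. x \<in> proj C (x - \<gamma> *\<^sub>R v)"
proof -
  have "x \<in> C" using stationary by (simp add: zero_in_frechet_subdiff_plus_ind_iff)
  then obtain R where "R > 0" and unique: "\<And>y. y \<in> cball x (2 * R) \<Longrightarrow> \<exists>!q. q \<in> proj C y"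
    using prox_regular_unique_proj_cball[OF \<open>prox_regular C\<close>] by blast
  define T where "T = (\<Inter>n \<in> frechet_normal_cone C x. {d. inner n d \<le> 0})"
  have "convex T" by (simp add: T_def convex_INT convex_halfspace_le)
  have "0 \<in> T" by (simp add: T_def)
  have "h x \<le> h (x + d)" if "d \<in> T" for d
    by (rule convex_model_min_on_polar_of_normal_cone[OF \<open>closed C\<close> unique \<open>R > 0\<close> assms(3) stationary
        assms(4,5) model]) (use that in \<open>auto simp: T_def\<close>)
  then obtain k where subgrad: "\<And>y. h x + inner k (y - x) \<le> h y" and polar: "\<And>d. d \<in> T \<Longrightarrow> 0 \<le> inner k d"
    using convex_on_min_imp_subgradient[OF \<open>convex_on UNIV h\<close> \<open>convex T\<close> \<open>0 \<in> T\<close>] by blast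
  have "- k \<in> frechet_normal_cone C x"
    using polar
    by (intro closed_convex_cone_bipolar[OF closed_frechet_normal_cone convex_cone_frechet_normal_cone])
      (auto simp: T_def)
  have "k \<in> frechet_subdiff (\<lambda>x. ereal (F x)) x"
    by (rule convex_model_subgradient_imp_frechet_subgradient[OF subgrad model \<open>0 \<le> M\<close>])
  moreover have "\<exists>\<gamma>>0. x \<in> proj C (x - \<gamma> *\<^sub>R k)"
    using frechet_normal_imp_proj_fixed[OF \<open>closed C\<close> unique \<open>x \<in> C\<close> \<open>R > 0\<close> \<open>- k \<in> frechet_normal_cone C x\<close>]
    by simp
  ultimately show ?thesis by blast
qed

theorem lemma1:
  fixes S :: "'a::euclidean_space \<Rightarrow> 'b::euclidean_space"
    and DS :: "'a \<Rightarrow> ('a \<Rightarrow>\<^sub>L 'b)"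
    and g :: "'b \<Rightarrow> real"
    and C :: "'a set"
    and \<eta> :: real
    and xs :: 'a
  assumes S_deriv: "\<And>x. (S has_derivative blinfun_apply (DS x)) (at x)"
    and S_lip: "\<exists>L. lipschitz_on L UNIV S"
    and DS_lip: "\<exists>L. lipschitz_on L UNIV DS"
    and g_lip: "\<exists>L. lipschitz_on L UNIV g"
    and eta_pos: "\<eta> > 0"
    and g_weak: "convex_on UNIV (\<lambda>z. g z + \<eta> / 2 * (norm z)\<^sup>2)"
    and C_ne: "C \<noteq> {}"
    and C_closed: "closed C"
    and C_prox: "prox_regular C"
    and argmin_ne: "\<exists>x\<in>C. \<forall>y\<in>C. (g \<circ> S) x \<le> (g \<circ> S) y"
  shows "0 \<in> frechet_subdiff (\<lambda>x. ereal ((g \<circ> S) x) + ind C x) xs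
         \<longleftrightarrow> (\<exists>\<gamma>>0. stat_measure (g \<circ> S) C \<gamma> xs = 0)"
proof -
  obtain LS LD Lg where "lipschitz_on LS UNIV S" "lipschitz_on LD UNIV DS" "lipschitz_on Lg UNIV g"
    using S_lip DS_lip g_lip by blast
  have F_lip: "lipschitz_on (Lg * LS) UNIV (g \<circ> S)"
    using lipschitz_on_compose[OF \<open>lipschitz_on LS UNIV S\<close> lipschitz_on_subset[OF \<open>lipschitz_on Lg UNIV g\<close>]]
    by simp
  obtain h M where "convex_on UNIV h" "0 \<le> M"
    and model: "\<And>y. \<bar>(h y - h xs) - ((g \<circ> S) y - (g \<circ> S) xs)\<bar> \<le> M * (norm (y - xs))\<^sup>2"
    using weakly_convex_composite_convex_model[OF S_deriv \<open>lipschitz_on LD UNIV DS\<close>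
        \<open>lipschitz_on Lg UNIV g\<close> less_imp_le[OF eta_pos] g_weak] by blast
  note measure_zero_iff = stat_measure_eq_0_iff[OF F_lip C_closed]
  show ?thesis
  proof
    assume "0 \<in> frechet_subdiff (\<lambda>x. ereal ((g \<circ> S) x) + ind C x) xs"
    then obtain \<gamma> v where "\<gamma> > 0" "v \<in> frechet_subdiff (\<lambda>x. ereal ((g \<circ> S) x)) xs"
      "xs \<in> proj C (xs - \<gamma> *\<^sub>R v)"
      using frechet_stationary_imp_proj_fixed[OF C_closed C_prox F_lip \<open>convex_on UNIV h\<close> \<open>0 \<le> M\<close> model]
      by blast
    then show "\<exists>\<gamma>>0. stat_measure (g \<circ> S) C \<gamma> xs = 0" using measure_zero_iff by blast
  next
    assume "\<exists>\<gamma>>0. stat_measure (g \<circ> S) C \<gamma> xs = 0"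
    then obtain \<gamma> v where "\<gamma> > 0" "v \<in> frechet_subdiff (\<lambda>x. ereal ((g \<circ> S) x)) xs"
      "xs \<in> proj C (xs - \<gamma> *\<^sub>R v)"
      using measure_zero_iff by blast
    then show "0 \<in> frechet_subdiff (\<lambda>x. ereal ((g \<circ> S) x) + ind C x) xs"
      using proj_fixed_imp_frechet_stationary by blast
  qed
qed

end
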